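(* Let $\mathcal{A}$ be a finite totally ordered alphabet, let $\sigma:\mathcal{A}\to\mathbb{N}_{\geq2}$, and let $\mathbf{M}\in\{\mathbf{Plax},\mathbf{Ch}\}$. Then $\mathbf{M}(\mathcal{A},\sigma)$ contains exactly $2^{|\mathcal{A}|}$ idempotents, one for each subset $\mathcal{B}=\{b_1<b_2<\cdots<b_k\}\subseteq\mathcal{A}$. The idempotent corresponding to $\mathcal{B}$ is the element of $\mathbf{M}(\mathcal{A},\sigma)$ represented by a word $I\in\mathcal{A}^*$ which is an inflation of a word representing the minimum element for the $\mathscr{J}$-order of $\mathbf{M}(\mathcal{B},2)$, and whose evaluation in $\mathbf{Com}(\mathcal{A},\sigma)$ is $\prod_{i=1}^k b_i^{\sigma(b_i)-1}$.
   Context: The plactic monoid $\mathbf{Plax}(\mathcal{A})$ is the quotient of the free monoid $\mathcal{A}^*$ by the relations $acb=cab$ for $a\le b<c$ and $bac=bca$ for $a<b\le c$. The Chinese monoid $\mathbf{Ch}(\mathcal{A})$ is the quotient of $\mathcal{A}^*$ by the relations $cba=cab=bca$ for $a<b<c$, and $aba=baa$, $bba=bab$ for $a<b$. For $\sigma:\mathcal{A}\to\mathbb{N}_{\geq2}$, $\mathbf{M}(\mathcal{A},\sigma)$ is the quotient of $\mathbf{M}(\mathcal{A})$ obtained by adding the relations $a^{\sigma(a)}=a$ for every $a\in\mathcal{A}$; $\mathbf{M}(\mathcal{B},2)$, for $\mathcal{B}\subseteq\mathcal{A}$ with the induced order, is the same construction over the alphabet $\mathcal{B}$ with $\sigma$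 constant equal to $2$. $\mathbf{Com}(\mathcal{A},\sigma)$ is the quotient of the free commutative monoid on $\mathcal{A}$ by the relations $a^{\sigma(a)}=a$, and the evaluation of a word is its image there. An inflation of a word $w_1\cdots w_m$ is any word $w_1^{\epsilon_1}\cdots w_m^{\epsilon_m}$ with all $\epsilon_j\geq1$. The $\mathscr{J}$-order on a monoid $M$ is the preorder $x\le_{\mathscr{J}}y$ iff $MxM\subseteq MyM$; the minimum element is the element $z$ with $z\le_{\mathscr{J}}x$ for all $x$. *)

theory Defs
  imports Main
begin

inductive rstep :: "('a list \<times> 'a list) set \<Rightarrow> 'a list \<Rightarrow> 'a list \<Rightarrow> bool"
  for R where
  "(u, v) \<in> R \<Longrightarrow> rstep R (x @ u @ y) (x @ v @ y)"

definition cong_gen :: "('a list \<times> 'a list) set \<Rightarrow> 'a list \<Rightarrow> 'a list \<Rightarrow> bool" where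
  "cong_gen R = equivclp (rstep R)"

datatype monoid_kind = Plax | Ch

definition plax_rels :: "'a::linorder set \<Rightarrow> ('a list \<times> 'a list) set" where
  "plax_rels A =
     {([a, c, b], [c, a, b]) | a b c. a \<in> A \<and> b \<in> A \<and> c \<in> A \<and> a \<le> b \<and> b < c}
   \<union> {([b, a, c], [b, c, a]) | a b c. a \<in> A \<and> b \<in> A \<and> c \<in> A \<and> a < b \<and> b \<le> c}"

definition ch_rels :: "'a::linorder set \<Rightarrow> ('a list \<times> 'a list) set" where
  "ch_rels A =
     {([c, b, a], [c, a, b]) | a b c. a \<in> A \<and> b \<in> A \<and> c \<in> A \<and> a < b \<and> b < c}
   \<union> {([c, a, b], [b, c, a]) | a b c. a \<in> A \<and> b \<in> A \<and> c \<in> A \<and> a < b \<and> b < c}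
   \<union> {([a, b, a], [b, a, a]) | a b. a \<in> A \<and> b \<in> A \<and> a < b}
   \<union> {([b, b, a], [b, a, b]) | a b. a \<in> A \<and> b \<in> A \<and> a < b}"

definition base_rels :: "monoid_kind \<Rightarrow> 'a::linorder set \<Rightarrow> ('a list \<times> 'a list) set" where
  "base_rels M A = (case M of Plax \<Rightarrow> plax_rels A | Ch \<Rightarrow> ch_rels A)"

definition pow_rels :: "'a set \<Rightarrow> ('a \<Rightarrow> nat) \<Rightarrow> ('a list \<times> 'a list) set" where
  "pow_rels A \<sigma> = {(replicate (\<sigma> a) a, [a]) | a. a \<in> A}"

definition M_rels :: "monoid_kind \<Rightarrow> 'a::linorder set \<Rightarrow> ('a \<Rightarrow> nat) \<Rightarrow> ('a list \<times> 'a list) set" where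
  "M_rels M A \<sigma> = base_rels M A \<union> pow_rels A \<sigma>"

definition Com_rels :: "'a set \<Rightarrow> ('a \<Rightarrow> nat) \<Rightarrow> ('a list \<times> 'a list) set" where
  "Com_rels A \<sigma> = {([a, b], [b, a]) | a b. a \<in> A \<and> b \<in> A} \<union> pow_rels A \<sigma>"

definition elem_of :: "('a list \<times> 'a list) set \<Rightarrow> 'a set \<Rightarrow> 'a list \<Rightarrow> 'a list set" where
  "elem_of R A w = {v \<in> lists A. cong_gen R w v}"

definition idempotents :: "monoid_kind \<Rightarrow> 'a::linorder set \<Rightarrow> ('a \<Rightarrow> nat) \<Rightarrow> 'a list set set" where
  "idempotents M A \<sigma> =
     {elem_of (M_rels M A \<sigma>) A w | w. w \<in> lists A \<and> cong_gen (M_rels M A \<sigma>) (w @ w) w}"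

text \<open>The word m (over B) represents a minimum element for the J-order of M(B,2):
  M m M \<subseteq> M x M for all x, i.e. m is equivalent to u x v for some u, v.\<close>
definition J_min_word :: "monoid_kind \<Rightarrow> 'a::linorder set \<Rightarrow> 'a list \<Rightarrow> bool" where
  "J_min_word M B m \<longleftrightarrow> m \<in> lists B \<and>
     (\<forall>x \<in> lists B. \<exists>u \<in> lists B. \<exists>v \<in> lists B. cong_gen (M_rels M B (\<lambda>_. 2)) m (u @ x @ v))"

inductive inflation :: "'a list \<Rightarrow> 'a list \<Rightarrow> bool" where
  "inflation [] []"
| "e \<ge> 1 \<Longrightarrow> inflation w I \<Longrightarrow> inflation (c # w) (replicate e c @ I)"

definition target_word :: "'a::linorder set \<Rightarrow> ('a \<Rightarrow> nat) \<Rightarrow> 'a list" where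
  "target_word B \<sigma> = concat (map (\<lambda>b. replicate (\<sigma> b - 1) b) (sorted_list_of_set B))"

end

theory Submission
  imports Defs "HOL-Library.Multiset"
begin

text \<open>
  For a subset B of the alphabet let D be the column word b_k ... b_1 (plactic case) or the
  zigzag word b_k b_1 b_(k-1) b_2 ... (Chinese case). In M(A, \<sigma>) every letter of B commutes
  with D, letters of B commute with each other once they stand right after D, and
  D b^(\<sigma>(b)-1) = D. Hence D u = D v as soon as u and v have the same letter counts modulo
  \<sigma>(b) - 1, and these counts are invariants of M(A, \<sigma>). Conversely every idempotent e with
  content B factors as u D v: in the plactic case column insertion of e^|B| fills the whole
  column, in the Chinese case the pairs b_k b_1, b_(k-1) b_2, ... are extracted one by one from
  powers of e. Since e = e e forces every count of e to vanish modulo \<sigma>(b) - 1, the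
  idempotent is D P with P the product of the b^(\<sigma>(b)-2). In M(B, 2) all counts vanish
  modulo 1, so D P absorbs every word of B*: it is itself a J-minimum word, and hence
  (trivially) an inflation of one.
\<close>

lemma cong_gen_refl [simp]: "cong_gen R u u"
  unfolding cong_gen_def by simp

lemma cong_gen_sym: "cong_gen R u v \<Longrightarrow> cong_gen R v u"
  unfolding cong_gen_def by (rule equivclp_sym)

lemma cong_gen_trans [trans]: "cong_gen R u v \<Longrightarrow> cong_gen R v w \<Longrightarrow> cong_gen R u w"
  unfolding cong_gen_def by (rule equivclp_trans)

lemma cong_gen_rule: "(u, v) \<in> R \<Longrightarrow> cong_gen R u v"
  unfolding cong_gen_def using rstep.intros[of u v R "[]" "[]"] by auto

lemma rstep_context: "rstep R u v \<Longrightarrow> rstep R (x @ u @ y) (x @ v @ y)"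
proof (induction rule: rstep.induct)
  case (1 u v x' y')
  then have "rstep R ((x @ x') @ u @ (y' @ y)) ((x @ x') @ v @ (y' @ y))"
    by (rule rstep.intros)
  then show ?case by simp
qed

lemma cong_gen_context: "cong_gen R u v \<Longrightarrow> cong_gen R (x @ u @ y) (x @ v @ y)"
  unfolding cong_gen_def
proof (induction rule: equivclp_induct)
  case (step b c)
  then have "rstep R (x @ b @ y) (x @ c @ y) \<or> rstep R (x @ c @ y) (x @ b @ y)"
    by (auto intro: rstep_context)
  then show ?case using step.IH by (rule equivclp_into_equivclp[rotated])
qed simp

lemma cong_gen_invariant:
  assumes "\<And>u v x y. (u, v) \<in> R \<Longrightarrow> f (x @ u @ y) = f (x @ v @ y)"
  shows "cong_gen R u v \<Longrightarrow> f u = f v"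
  unfolding cong_gen_def
proof (induction rule: equivclp_induct)
  case (step b c)
  then have "f b = f c" by (auto elim!: rstep.cases dest: assms) (metis assms)
  with step.IH show ?case by simp
qed simp

lemma cong_gen_idem_power:
  assumes "cong_gen R (u @ u) u"
  shows "0 < n \<Longrightarrow> cong_gen R (concat (replicate n u)) u"
proof (induction n)
  case (Suc n)
  show ?case
  proof (cases "n = 0")
    case False
    with Suc have "cong_gen R (u @ concat (replicate n u)) (u @ u)"
      using cong_gen_context[of R _ u u "[]"] by simp
    then show ?thesis using cong_gen_trans[OF _ assms] by simp
  qed simp
qed simp

lemma elem_of_cong: "cong_gen R w w' \<Longrightarrow> elem_of R A w = elem_of R A w'"
  unfolding elem_of_def by (blast intro: cong_gen_sym cong_gen_trans)

section \<open>Central words\<close>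

definition central_word :: "('a list \<times> 'a list) set \<Rightarrow> 'a set \<Rightarrow> 'a list \<Rightarrow> bool" where
  "central_word R S Z \<longleftrightarrow> (\<forall>x\<in>S. cong_gen R (x # Z) (Z @ [x]))"

definition commuting_after :: "('a list \<times> 'a list) set \<Rightarrow> 'a list \<Rightarrow> 'a set \<Rightarrow> 'a set \<Rightarrow> bool" where
  "commuting_after R Z T S \<longleftrightarrow> (\<forall>x\<in>T. \<forall>y\<in>S. cong_gen R (Z @ [x, y]) (Z @ [y, x]))"

lemma central_word_commute:
  assumes "central_word R S Z"
  shows "set w \<subseteq> S \<Longrightarrow> cong_gen R (w @ Z) (Z @ w)"
proof (induction w)
  case (Cons t w)
  then have "cong_gen R ((t # w) @ Z) (t # Z @ w)"
    using cong_gen_context[of R "w @ Z" "Z @ w" "[t]" "[]"] by simp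
  also have "cong_gen R (t # Z @ w) (Z @ t # w)"
    using assms Cons.prems cong_gen_context[of R "t # Z" "Z @ [t]" "[]" w]
    by (simp add: central_word_def)
  finally show ?case .
qed simp

lemma commuting_after_move:
  assumes central: "central_word R S Z" and comm: "commuting_after R Z T S" and "t \<in> T"
  shows "set m \<subseteq> S \<Longrightarrow> cong_gen R (Z @ t # m) (Z @ m @ [t])"
proof (induction m)
  case (Cons y m)
  have y: "cong_gen R (y # Z) (Z @ [y])" using central Cons.prems by (simp add: central_word_def)
  have "cong_gen R (Z @ t # y # m) (Z @ y # t # m)"
    using comm \<open>t \<in> T\<close> Cons.prems cong_gen_context[of R "Z @ [t, y]" "Z @ [y, t]" "[]" m]
    by (simp add: commuting_after_def)
  also have "cong_gen R (Z @ y # t # m) (y # Z @ t # m)"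
    using cong_gen_context[OF cong_gen_sym[OF y], of "[]" "t # m"] by simp
  also have "cong_gen R (y # Z @ t # m) (y # Z @ m @ [t])"
    using cong_gen_context[OF Cons.IH, of "[y]" "[]"] Cons.prems by simp
  also have "cong_gen R (y # Z @ m @ [t]) (Z @ y # m @ [t])"
    using cong_gen_context[OF y, of "[]" "m @ [t]"] by simp
  finally show ?case by simp
qed simp

lemma commuting_after_append_central:
  assumes central: "central_word R S Z" and "set w \<subseteq> S" and comm: "commuting_after R Z T S"
  shows "commuting_after R (Z @ w) T S"
  unfolding commuting_after_def
proof (intro ballI)
  fix x y assume "x \<in> T" "y \<in> S"
  have wZ: "cong_gen R (Z @ w) (w @ Z)"
    using cong_gen_sym[OF central_word_commute[OF central \<open>set w \<subseteq> S\<close>]] .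
  have "cong_gen R ((Z @ w) @ [x, y]) (w @ Z @ [x, y])"
    using cong_gen_context[OF wZ, of "[]" "[x, y]"] by simp
  also have "cong_gen R \<dots> (w @ Z @ [y, x])"
    using comm \<open>x \<in> T\<close> \<open>y \<in> S\<close> cong_gen_context[of R "Z @ [x, y]" "Z @ [y, x]" w "[]"]
    by (simp add: commuting_after_def)
  also have "cong_gen R \<dots> ((Z @ w) @ [y, x])"
    using cong_gen_context[OF cong_gen_sym[OF wZ], of "[]" "[y, x]"] by simp
  finally show "cong_gen R ((Z @ w) @ [x, y]) ((Z @ w) @ [y, x])" .
qed

lemma commuting_after_filter:
  assumes central: "central_word R S Z" and comm: "commuting_after R Z T S"
  shows "set w \<subseteq> S \<Longrightarrow>
    cong_gen R (Z @ w) (Z @ filter (\<lambda>x. x \<notin> T) w @ filter (\<lambda>x. x \<in> T) w)"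
proof (induction w)
  case (Cons t w)
  define fi fo where "fi = filter (\<lambda>x. x \<notin> T) w" and "fo = filter (\<lambda>x. x \<in> T) w"
  have "cong_gen R (Z @ t # w) (t # Z @ w)"
    using central_word_commute[OF central, of "[t]"] Cons.prems
      cong_gen_context[of R "Z @ [t]" "[t] @ Z" "[]" w] cong_gen_sym by fastforce
  also have "cong_gen R (t # Z @ w) (t # Z @ fi @ fo)"
    using cong_gen_context[OF Cons.IH, of "[t]" "[]"] Cons.prems fi_def fo_def by simp
  also have "cong_gen R (t # Z @ fi @ fo) (Z @ t # fi @ fo)"
    using central_word_commute[OF central, of "[t]"] Cons.prems
      cong_gen_context[of R "[t] @ Z" "Z @ [t]" "[]" "fi @ fo"] by simp
  finally have moved: "cong_gen R (Z @ t # w) (Z @ t # fi @ fo)" .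
  show ?case
  proof (cases "t \<in> T")
    case True
    have "set fi \<subseteq> S" using Cons.prems fi_def by auto
    then have "cong_gen R (Z @ t # fi @ fo) (Z @ fi @ [t] @ fo)"
      using cong_gen_context[OF commuting_after_move[OF central comm True], of fi "[]" fo] by simp
    with cong_gen_trans[OF moved] True show ?thesis by (simp add: fi_def fo_def)
  qed (use moved fi_def fo_def in simp)
qed simp

lemma central_word_perm:
  assumes central: "central_word R S Z" and comm: "commuting_after R Z S S"
  shows "set u \<subseteq> S \<Longrightarrow> mset u = mset v \<Longrightarrow> cong_gen R (Z @ u) (Z @ v)"
proof (induction u arbitrary: v)
  case (Cons x u)
  then have "x \<in> set v" by (metis list.set_intros(1) set_mset_mset)
  then obtain v1 v2 where v: "v = v1 @ x # v2" by (meson split_list)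
  have "set (x # u) = set v" using Cons.prems(2) by (metis set_mset_mset)
  then have S: "x \<in> S" "set v1 \<subseteq> S" using Cons.prems(1) v by auto
  have x: "cong_gen R ([x] @ Z) (Z @ [x])"
    using central_word_commute[OF central, of "[x]"] S by simp
  have "mset u = mset (v1 @ v2)" using Cons.prems(2) v by simp
  then have IH: "cong_gen R (Z @ u) (Z @ v1 @ v2)" using Cons by simp
  have "cong_gen R (Z @ x # u) (x # Z @ u)"
    using cong_gen_context[OF cong_gen_sym[OF x], of "[]" u] by simp
  also have "cong_gen R \<dots> (x # Z @ v1 @ v2)"
    using cong_gen_context[OF IH, of "[x]" "[]"] by simp
  also have "cong_gen R \<dots> (Z @ x # v1 @ v2)"
    using cong_gen_context[OF x, of "[]" "v1 @ v2"] by simp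
  also have "cong_gen R (Z @ x # v1 @ v2) (Z @ v1 @ x # v2)"
    using cong_gen_context[OF commuting_after_move[OF central comm S], of "[]" v2] by simp
  finally show ?case using v by simp
qed simp

lemma count_concat_map_replicate:
  "distinct xs \<Longrightarrow>
    count (mset (concat (map (\<lambda>x. replicate (f x) x) xs))) y = (if y \<in> set xs then f y else 0)"
  by (induction xs) auto

lemma cong_gen_replicate_mod:
  assumes "cong_gen R (Z @ replicate p x) Z"
  shows "cong_gen R (Z @ replicate n x @ w) (Z @ replicate (n mod p) x @ w)"
proof (induction n rule: less_induct)
  case (less n)
  show ?case
  proof (cases "p = 0 \<or> n < p")
    case False
    then have "replicate n x = replicate p x @ replicate (n - p) x"
      by (metis le_add_diff_inverse not_less replicate_add)
    then have "cong_gen R (Z @ replicate n x @ w) (Z @ replicate (n - p) x @ w)"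
      using cong_gen_context[OF assms, of "[]" "replicate (n - p) x @ w"] by simp
    also have "cong_gen R \<dots> (Z @ replicate ((n - p) mod p) x @ w)"
      using less.IH False by simp
    finally show ?thesis using False by (simp add: le_mod_geq)
  qed auto
qed

lemma central_word_replicate_mod_list:
  assumes central: "central_word R S Z"
    and powers: "\<And>x. x \<in> S \<Longrightarrow> cong_gen R (Z @ replicate (p x) x) Z"
  shows "set xs \<subseteq> S \<Longrightarrow> cong_gen R (Z @ concat (map (\<lambda>x. replicate (n x) x) xs))
    (Z @ concat (map (\<lambda>x. replicate (n x mod p x) x) xs))"
proof (induction xs)
  case (Cons a xs)
  define r rest rest' where "r = replicate (n a mod p a) a"
    and "rest = concat (map (\<lambda>x. replicate (n x) x) xs)"
    and "rest' = concat (map (\<lambda>x. replicate (n x mod p x) x) xs)"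
  have r: "cong_gen R (r @ Z) (Z @ r)"
    using central_word_commute[OF central, of r] Cons.prems
    by (simp add: r_def set_replicate_conv_if)
  have "cong_gen R (Z @ replicate (n a) a @ rest) (Z @ r @ rest)"
    using cong_gen_replicate_mod[OF powers] Cons.prems r_def by simp
  also have "cong_gen R (Z @ r @ rest) (r @ Z @ rest)"
    using cong_gen_context[OF cong_gen_sym[OF r], of "[]" rest] by simp
  also have "cong_gen R (r @ Z @ rest) (r @ Z @ rest')"
    using cong_gen_context[OF Cons.IH, of r "[]"] Cons.prems rest_def rest'_def by simp
  also have "cong_gen R (r @ Z @ rest') (Z @ r @ rest')"
    using cong_gen_context[OF r, of "[]" rest'] by simp
  finally show ?case by (simp add: r_def rest_def rest'_def)
qed simp

lemma central_word_mod_counts: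
  assumes "finite S" and central: "central_word R S Z" and comm: "commuting_after R Z S S"
    and powers: "\<And>x. x \<in> S \<Longrightarrow> cong_gen R (Z @ replicate (p x) x) Z"
    and "set u \<subseteq> S" "set v \<subseteq> S"
    and counts: "\<And>x. x \<in> S \<Longrightarrow> count (mset u) x mod p x = count (mset v) x mod p x"
  shows "cong_gen R (Z @ u) (Z @ v)"
proof -
  obtain xs where xs: "set xs = S" "distinct xs" using finite_distinct_list[OF \<open>finite S\<close>] by blast
  define normal where
    "normal w = concat (map (\<lambda>x. replicate (count (mset w) x mod p x) x) xs)" for w
  have to_normal: "cong_gen R (Z @ w) (Z @ normal w)" if w: "set w \<subseteq> S" for w
  proof -
    have "mset w = mset (concat (map (\<lambda>x. replicate (count (mset w) x) x) xs))"
      using w xs by (intro multiset_eqI) (auto simp: count_concat_map_replicate count_eq_zero_iff)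
    then have "cong_gen R (Z @ w) (Z @ concat (map (\<lambda>x. replicate (count (mset w) x) x) xs))"
      by (rule central_word_perm[OF central comm w])
    also have "cong_gen R \<dots> (Z @ normal w)"
      unfolding normal_def using central_word_replicate_mod_list[OF central powers] xs by simp
    finally show ?thesis .
  qed
  have "normal u = normal v" unfolding normal_def using counts xs
    by (auto intro!: arg_cong[where f = concat] map_cong)
  then have "cong_gen R (Z @ normal u) (Z @ v)"
    using cong_gen_sym[OF to_normal[OF \<open>set v \<subseteq> S\<close>]] by simp
  with to_normal[OF \<open>set u \<subseteq> S\<close>] show ?thesis by (rule cong_gen_trans)
qed

lemma mset_eq_base_rels: "(u, v) \<in> base_rels M X \<Longrightarrow> mset u = mset v"
  by (cases M) (auto simp: base_rels_def plax_rels_def ch_rels_def)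

locale periodic_generators =
  fixes X :: "'a::linorder set" and \<sigma> :: "'a \<Rightarrow> nat"
  assumes period_ge_2: "x \<in> X \<Longrightarrow> 2 \<le> \<sigma> x"
begin

abbreviation eqv :: "monoid_kind \<Rightarrow> 'a list \<Rightarrow> 'a list \<Rightarrow> bool" where
  "eqv M \<equiv> cong_gen (M_rels M X \<sigma>)"

lemma eqv_power: "a \<in> X \<Longrightarrow> eqv M (replicate (\<sigma> a) a) [a]"
  by (rule cong_gen_rule) (auto simp: M_rels_def pow_rels_def)

lemma Cons_replicate_pred_period: "a \<in> X \<Longrightarrow> a # replicate (\<sigma> a - 1) a = replicate (\<sigma> a) a"
  using period_ge_2[of a] by (cases "\<sigma> a") simp_all

lemma eqv_cancel_square:
  assumes "c \<in> X" and "eqv M (c # c # p) (c # c # q)"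
  shows "eqv M (c # p) (c # q)"
proof -
  define r where "r = replicate (\<sigma> c - 2) c"
  have "\<sigma> c = (\<sigma> c - 2) + 2" using period_ge_2[OF \<open>c \<in> X\<close>] by simp
  then have "replicate (\<sigma> c) c = r @ [c, c]"
    by (metis r_def replicate_add replicate_Suc replicate_0 numeral_2_eq_2)
  then have c: "eqv M [c] (r @ [c, c])" using cong_gen_sym[OF eqv_power[OF \<open>c \<in> X\<close>]] by simp
  have "eqv M (c # p) (r @ c # c # p)" using cong_gen_context[OF c, of "[]" p] by simp
  also have "eqv M \<dots> (r @ c # c # q)" using cong_gen_context[OF assms(2), of r "[]"] by simp
  also have "eqv M \<dots> (c # q)" using cong_gen_context[OF cong_gen_sym[OF c], of "[]" q] by simp
  finally show ?thesis .
qed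

lemma eqv_plax_acb:
  "a \<in> X \<Longrightarrow> b \<in> X \<Longrightarrow> c \<in> X \<Longrightarrow> a \<le> b \<Longrightarrow> b < c \<Longrightarrow> eqv Plax [a, c, b] [c, a, b]"
  by (rule cong_gen_rule) (auto simp: M_rels_def base_rels_def plax_rels_def)

lemma eqv_plax_bac:
  "a \<in> X \<Longrightarrow> b \<in> X \<Longrightarrow> c \<in> X \<Longrightarrow> a < b \<Longrightarrow> b \<le> c \<Longrightarrow> eqv Plax [b, a, c] [b, c, a]"
  by (rule cong_gen_rule) (auto simp: M_rels_def base_rels_def plax_rels_def)

lemma eqv_ch_cba:
  "a \<in> X \<Longrightarrow> b \<in> X \<Longrightarrow> c \<in> X \<Longrightarrow> a < b \<Longrightarrow> b < c \<Longrightarrow> eqv Ch [c, b, a] [c, a, b]"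
  by (rule cong_gen_rule) (auto simp: M_rels_def base_rels_def ch_rels_def)

lemma eqv_ch_cab:
  "a \<in> X \<Longrightarrow> b \<in> X \<Longrightarrow> c \<in> X \<Longrightarrow> a < b \<Longrightarrow> b < c \<Longrightarrow> eqv Ch [c, a, b] [b, c, a]"
  by (rule cong_gen_rule) (auto simp: M_rels_def base_rels_def ch_rels_def)

lemma eqv_ch_aba: "a \<in> X \<Longrightarrow> b \<in> X \<Longrightarrow> a < b \<Longrightarrow> eqv Ch [a, b, a] [b, a, a]"
  by (rule cong_gen_rule) (auto simp: M_rels_def base_rels_def ch_rels_def)

lemma eqv_ch_bba: "a \<in> X \<Longrightarrow> b \<in> X \<Longrightarrow> a < b \<Longrightarrow> eqv Ch [b, b, a] [b, a, b]"
  by (rule cong_gen_rule) (auto simp: M_rels_def base_rels_def ch_rels_def)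

lemma eqv_set_eq: "eqv M u v \<Longrightarrow> set u = set v"
proof (rule cong_gen_invariant)
  fix p q x y :: "'a list"
  assume "(p, q) \<in> M_rels M X \<sigma>"
  then have "set p = set q"
    unfolding M_rels_def pow_rels_def
    by (auto dest!: mset_eq_base_rels period_ge_2 simp flip: set_mset_mset)
  then show "set (x @ p @ y) = set (x @ q @ y)" by simp
qed

lemma eqv_count_mod:
  "eqv M u v \<Longrightarrow> count (mset u) a mod (\<sigma> a - 1) = count (mset v) a mod (\<sigma> a - 1)"
proof (rule cong_gen_invariant)
  fix p q x y :: "'a list"
  assume "(p, q) \<in> M_rels M X \<sigma>"
  then consider "mset p = mset q" | b where "b \<in> X" "p = replicate (\<sigma> b) b" "q = [b]"
    unfolding M_rels_def pow_rels_def by (auto dest: mset_eq_base_rels)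
  then have "count (mset p) a mod (\<sigma> a - 1) = count (mset q) a mod (\<sigma> a - 1)"
  proof cases
    case 2
    have "\<sigma> b = (\<sigma> b - 1) + 1" using period_ge_2[OF \<open>b \<in> X\<close>] by simp
    then have "\<sigma> b mod (\<sigma> b - 1) = 1 mod (\<sigma> b - 1)" by (metis mod_add_self1)
    with 2 show ?thesis by (cases "a = b") simp_all
  qed simp
  then show "count (mset (x @ p @ y)) a mod (\<sigma> a - 1) = count (mset (x @ q @ y)) a mod (\<sigma> a - 1)"
    using mod_add_cong[OF mod_add_cong[OF refl], OF _ refl] by (simp add: add.assoc)
qed

end

section \<open>Columns in the plactic monoid\<close>

definition column :: "'a::linorder set \<Rightarrow> 'a list" where
  "column T = rev (sorted_list_of_set T)"

lemma column_set: "sorted_wrt (>) xs \<Longrightarrow> column (set xs) = xs"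
proof -
  assume sorted: "sorted_wrt (>) xs"
  have "distinct xs" using sorted by (induction xs) auto
  with sorted have "sorted_wrt (<) (rev xs) \<and> set (rev xs) = set xs \<and> length (rev xs) = card (set xs)"
    by (simp add: sorted_wrt_rev distinct_card)
  then have "sorted_list_of_set (set xs) = rev xs"
    using sorted_list_of_set_unique[of "set xs" "rev xs"] by simp
  then show ?thesis unfolding column_def by simp
qed

lemma
  assumes "finite T"
  shows sorted_column: "sorted_wrt (>) (column T)" and set_column: "set (column T) = T"
  using assms unfolding column_def by (simp_all add: sorted_wrt_rev strict_sorted_list_of_set)

lemma column_split:
  assumes "finite T" "s \<in> T"
  shows "column T = column {y\<in>T. s < y} @ s # column {y\<in>T. y < s}"
proof -
  define U L where "U = column {y\<in>T. s < y}" and "L = column {y\<in>T. y < s}"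
  have "finite {y\<in>T. s < y}" "finite {y\<in>T. y < s}" using \<open>finite T\<close> by (auto intro: finite_subset[of _ T])
  then have U: "sorted_wrt (>) U" "set U = {y\<in>T. s < y}"
    and L: "sorted_wrt (>) L" "set L = {y\<in>T. y < s}"
    unfolding U_def L_def by (simp_all only: sorted_column set_column)
  have "\<forall>x\<in>set U. \<forall>y\<in>set (s # L). y < x"
  proof (intro ballI)
    fix x y assume "x \<in> set U" "y \<in> set (s # L)"
    then have "s < x" "y \<le> s" using U(2) L(2) by auto
    then show "y < x" by simp
  qed
  moreover have "sorted_wrt (>) (s # L)" using L by simp
  ultimately have "sorted_wrt (>) (U @ s # L)" unfolding sorted_wrt_append using U(1) by blast
  then have "column (set (U @ s # L)) = U @ s # L" by (rule column_set)
  moreover have "set (U @ s # L) = T"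
  proof (intro set_eqI iffI)
    fix y assume "y \<in> T"
    then show "y \<in> set (U @ s # L)" by (cases y s rule: linorder_cases) (simp_all add: U(2) L(2))
  qed (use U(2) L(2) \<open>s \<in> T\<close> in auto)
  ultimately have "column T = U @ s # L" by simp
  then show ?thesis by (simp only: U_def L_def)
qed

text \<open>Schensted insertion of the letter t into the column T.\<close>
definition column_insert :: "'a::linorder \<Rightarrow> 'a set \<Rightarrow> 'a set" where
  "column_insert t T =
     (if \<forall>y\<in>T. y < t then insert t T else insert t (T - {Min {y\<in>T. t \<le> y}}))"

lemma column_insert_subset: "column_insert t T \<subseteq> insert t T"
  unfolding column_insert_def by auto

lemma finite_column_insert: "finite T \<Longrightarrow> finite (column_insert t T)"
  unfolding column_insert_def by auto

lemma foldr_column_insert_subset: "foldr column_insert v T \<subseteq> set v \<union> T"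
  by (induction v) (use column_insert_subset in fastforce)+

lemma finite_foldr_column_insert: "finite T \<Longrightarrow> finite (foldr column_insert v T)"
  by (induction v) (auto simp: finite_column_insert)

lemma column_insert_bumped:
  assumes "finite T" "\<not> (\<forall>y\<in>T. y < t)"
  defines "s \<equiv> Min {y\<in>T. t \<le> y}"
  shows "s \<in> T" "t \<le> s" "\<And>y. y \<in> T \<Longrightarrow> y < s \<Longrightarrow> y < t"
    and "column_insert t T = insert t (T - {s})"
proof -
  have ne: "{y\<in>T. t \<le> y} \<noteq> {}" "finite {y\<in>T. t \<le> y}" using assms(1,2) by (auto simp: not_less)
  show "s \<in> T" "t \<le> s" using Min_in[OF ne(2) ne(1)] s_def by auto
  show "y < t" if "y \<in> T" "y < s" for y
  proof (rule ccontr)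
    assume "\<not> y < t"
    then have "s \<le> y" unfolding s_def using that(1) ne(2) by (simp add: not_less)
    with \<open>y < s\<close> show False by simp
  qed
  show "column_insert t T = insert t (T - {s})"
    unfolding column_insert_def s_def by (rule if_not_P[OF assms(2)])
qed

lemma column_column_insert_bumped:
  assumes "finite T" "\<not> (\<forall>y\<in>T. y < t)"
  defines "s \<equiv> Min {y\<in>T. t \<le> y}"
  shows "column (column_insert t T) = column {y\<in>T. s < y} @ t # column {y\<in>T. y < s}"
proof -
  note s = column_insert_bumped[OF assms(1,2), folded s_def]
  have "{y\<in>insert t (T - {s}). t < y} = {y\<in>T. s < y}"
  proof (intro set_eqI iffI)
    fix y assume "y \<in> {y\<in>insert t (T - {s}). t < y}"
    with s(3)[of y] show "y \<in> {y\<in>T. s < y}" by (cases y s rule: linorder_cases) auto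
  qed (use s(2) in auto)
  moreover have "{y\<in>insert t (T - {s}). y < t} = {y\<in>T. y < s}"
    using s(2,3) by auto
  ultimately show ?thesis using column_split[of "insert t (T - {s})" t] assms(1) s(4) by simp
qed

lemma card_le_column_insert:
  assumes "finite T"
  shows "card {y\<in>T. y \<le> x} \<le> card {y\<in>column_insert t T. y \<le> x}"
proof (cases "\<forall>y\<in>T. y < t")
  case True
  then show ?thesis using assms unfolding column_insert_def by (intro card_mono) auto
next
  case False
  define s where "s = Min {y\<in>T. t \<le> y}"
  note s = column_insert_bumped[OF assms False, folded s_def]
  show ?thesis
  proof (cases "x < s")
    case True
    then show ?thesis using assms unfolding s(4) by (intro card_mono) auto
  next
    case False
    define A where "A = {y\<in>T - {s}. y \<le> x}"
    have "finite A" "s \<notin> A" using assms by (auto simp: A_def)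
    have "t \<notin> A"
    proof
      assume "t \<in> A"
      then have "t < s" using s(2) by (auto simp: A_def)
      with s(3) \<open>t \<in> A\<close> show False by (auto simp: A_def)
    qed
    have "card {y\<in>T. y \<le> x} = card (insert s A)"
      using False s(1) by (intro arg_cong[where f = card]) (auto simp: A_def)
    also have "\<dots> = card (insert t A)" using \<open>finite A\<close> \<open>s \<notin> A\<close> \<open>t \<notin> A\<close> by simp
    also have "\<dots> \<le> card {y\<in>column_insert t T. y \<le> x}"
      using False s(2) assms unfolding s(4) by (intro card_mono) (auto simp: A_def)
    finally show ?thesis .
  qed
qed

lemma card_less_column_insert:
  assumes "finite T"
  shows "card {y\<in>T. y < t} < card {y\<in>column_insert t T. y \<le> t}"
proof -
  have "y \<in> column_insert t T" if "y \<in> T" "y < t" for y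
  proof (cases "\<forall>y\<in>T. y < t")
    case False
    note s = column_insert_bumped[OF assms False]
    from \<open>y < t\<close> s(2) have "y \<noteq> Min {y\<in>T. t \<le> y}" by simp
    with \<open>y \<in> T\<close> show ?thesis unfolding s(4) by simp
  qed (simp add: column_insert_def \<open>y \<in> T\<close>)
  moreover have "t \<in> column_insert t T" by (simp add: column_insert_def)
  ultimately have "insert t {y\<in>T. y < t} \<subseteq> {y\<in>column_insert t T. y \<le> t}" by auto
  moreover have "finite {y\<in>column_insert t T. y \<le> t}" using finite_column_insert[OF assms] by simp
  ultimately have "card (insert t {y\<in>T. y < t}) \<le> card {y\<in>column_insert t T. y \<le> t}"
    by (rule card_mono[rotated])
  then show ?thesis using assms by simp
qed

lemma card_le_foldr_column_insert:
  "finite T \<Longrightarrow> card {y\<in>T. y \<le> x} \<le> card {y\<in>foldr column_insert v T. y \<le> x}"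
proof (induction v)
  case (Cons t v)
  then show ?case
    using card_le_column_insert[OF finite_foldr_column_insert[OF Cons.prems, of v], of x t] by simp
qed simp

lemma card_less_of_card_le:
  fixes B T :: "'a::linorder set"
  assumes "finite B" "finite T"
    and le: "\<forall>x'\<in>B. min j (card {y\<in>B. y \<le> x'}) \<le> card {y\<in>T. y \<le> x'}"
  shows "min j (card {y\<in>B. y < x}) \<le> card {y\<in>T. y < x}"
proof (cases "{y\<in>B. y < x} = {}")
  case False
  define x' where "x' = Max {y\<in>B. y < x}"
  have "x' \<in> B" "x' < x" using Max_in[OF _ False] assms(1) by (auto simp: x'_def)
  have "{y\<in>B. y < x} = {y\<in>B. y \<le> x'}"
  proof (intro set_eqI iffI)
    fix y assume "y \<in> {y\<in>B. y < x}"
    then show "y \<in> {y\<in>B. y \<le> x'}" using assms(1) by (simp add: x'_def)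
  next
    fix y assume "y \<in> {y\<in>B. y \<le> x'}"
    then show "y \<in> {y\<in>B. y < x}" using le_less_trans[OF _ \<open>x' < x\<close>] by simp
  qed
  then have "min j (card {y\<in>B. y < x}) \<le> card {y\<in>T. y \<le> x'}" using le \<open>x' \<in> B\<close> by simp
  also have "\<dots> \<le> card {y\<in>T. y < x}"
    using \<open>x' < x\<close> assms(2) by (intro card_mono) (auto dest: le_less_trans[of _ x' x])
  finally show ?thesis .
qed (metis card.empty le0 min_0R)

text \<open>Each pass through e inserts x, and inserting x leaves more letters \<le> x in the column
  than there were letters < x before; so after j passes at least min j r letters \<le> x remain,
  r being the rank of x in B.\<close>
lemma card_le_column_insert_powers:
  assumes "set e = B"
  shows "\<forall>x\<in>B. min j (card {y\<in>B. y \<le> x})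
    \<le> card {y\<in>foldr column_insert (concat (replicate j e)) {}. y \<le> x}"
proof (induction j)
  case (Suc j)
  define T where "T = foldr column_insert (concat (replicate j e)) {}"
  have "finite T" by (simp add: T_def finite_foldr_column_insert)
  have "finite B" using assms by (metis List.finite_set)
  show ?case
  proof
    fix x assume "x \<in> B"
    obtain e1 e2 where e: "e = e1 @ x # e2" using split_list \<open>x \<in> B\<close> assms by metis
    define T2 where "T2 = foldr column_insert e2 T"
    have "finite T2" using \<open>finite T\<close> by (simp add: T2_def finite_foldr_column_insert)
    have "\<forall>x'\<in>B. min j (card {y\<in>B. y \<le> x'}) \<le> card {y\<in>T2. y \<le> x'}"
    proof
      fix x' assume "x' \<in> B"
      with Suc.IH have "min j (card {y\<in>B. y \<le> x'}) \<le> card {y\<in>T. y \<le> x'}"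
        by (simp add: T_def)
      also have "\<dots> \<le> card {y\<in>T2. y \<le> x'}"
        unfolding T2_def by (rule card_le_foldr_column_insert[OF \<open>finite T\<close>])
      finally show "min j (card {y\<in>B. y \<le> x'}) \<le> card {y\<in>T2. y \<le> x'}" .
    qed
    then have "min j (card {y\<in>B. y < x}) \<le> card {y\<in>T2. y < x}"
      by (rule card_less_of_card_le[OF \<open>finite B\<close> \<open>finite T2\<close>])
    also have "\<dots> < card {y\<in>column_insert x T2. y \<le> x}"
      by (rule card_less_column_insert[OF \<open>finite T2\<close>])
    also have "\<dots> \<le> card {y\<in>foldr column_insert e1 (column_insert x T2). y \<le> x}"
      by (rule card_le_foldr_column_insert[OF finite_column_insert[OF \<open>finite T2\<close>]])
    also have "foldr column_insert e1 (column_insert x T2) =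
        foldr column_insert (concat (replicate (Suc j) e)) {}"
      by (simp add: e T_def T2_def)
    finally have less: "min j (card {y\<in>B. y < x}) <
        card {y\<in>foldr column_insert (concat (replicate (Suc j) e)) {}. y \<le> x}" .
    have "{y\<in>B. y \<le> x} = insert x {y\<in>B. y < x}" using \<open>x \<in> B\<close> by (auto simp: le_less)
    then have "card {y\<in>B. y \<le> x} = Suc (card {y\<in>B. y < x})" using \<open>finite B\<close> by simp
    with less show "min (Suc j) (card {y\<in>B. y \<le> x})
        \<le> card {y\<in>foldr column_insert (concat (replicate (Suc j) e)) {}. y \<le> x}"
      by simp
  qed
qed simp

context periodic_generators
begin

lemma plax_shift_across_larger:
  "sorted_wrt (>) C \<Longrightarrow> set C \<subseteq> X \<Longrightarrow> t \<in> X \<Longrightarrow> q \<in> X \<Longrightarrow> t \<le> q \<Longrightarrow>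
   \<forall>m\<in>set C. q < m \<Longrightarrow> eqv Plax (t # C @ [q]) (C @ [t, q])"
proof (induction C)
  case (Cons m C)
  obtain b rest where b: "C @ [q] = b # rest" by (cases "C @ [q]") auto
  then have "b = q \<or> b \<in> set C" by (cases C) auto
  with Cons.prems have "eqv Plax [t, m, b] [m, t, b]"
    by (intro eqv_plax_acb) auto
  then have "eqv Plax (t # m # C @ [q]) (m # t # C @ [q])"
    using cong_gen_context[of _ "[t, m, b]" "[m, t, b]" "[]" rest] b by simp
  also have "eqv Plax \<dots> (m # C @ [t, q])"
    using cong_gen_context[OF Cons.IH, of "[m]" "[]"] Cons.prems by simp
  finally show ?case by simp
qed simp

lemma plax_shift_across_smaller:
  "sorted_wrt (>) C \<Longrightarrow> set C \<subseteq> X \<Longrightarrow> p \<in> X \<Longrightarrow> t \<in> X \<Longrightarrow> p \<le> t \<Longrightarrow>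
   \<forall>m\<in>set C. m < p \<Longrightarrow> eqv Plax (p # t # C) (p # C @ [t])"
proof (induction C arbitrary: p)
  case (Cons m C)
  then have "eqv Plax [p, t, m] [p, m, t]"
    using cong_gen_sym[OF eqv_plax_bac[of m p t]] by auto
  then have "eqv Plax (p # t # m # C) (p # m # t # C)"
    using cong_gen_context[of _ "[p, t, m]" "[p, m, t]" "[]" C] by simp
  also have "eqv Plax \<dots> (p # m # C @ [t])"
    using cong_gen_context[OF Cons.IH[of m], of "[p]" "[]"] Cons.prems by auto
  finally show ?case by simp
qed simp

lemma plax_decreasing_central:
  assumes D: "sorted_wrt (>) D" "set D \<subseteq> X" and "x \<in> set D"
  shows "eqv Plax (x # D) (D @ [x])"
proof -
  obtain U L where D_eq: "D = U @ x # L" using split_list[OF \<open>x \<in> set D\<close>] by blast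
  with D have sorted: "sorted_wrt (>) U" "sorted_wrt (>) L" "\<forall>u\<in>set U. x < u" "\<forall>l\<in>set L. l < x"
    and X: "set U \<subseteq> X" "set L \<subseteq> X" "x \<in> X"
    by (auto simp: sorted_wrt_append)
  have "eqv Plax (x # U @ [x] @ L) (U @ [x, x] @ L)"
    using cong_gen_context[OF plax_shift_across_larger[OF sorted(1) X(1,3,3)], of "[]" L] sorted
    by simp
  also have "eqv Plax \<dots> (U @ [x] @ L @ [x])"
    using cong_gen_context[OF plax_shift_across_smaller[OF sorted(2) X(2,3,3)], of U "[]"] sorted
    by simp
  finally show ?thesis using D_eq by simp
qed

lemma plax_gather_copies:
  assumes "sorted_wrt (>) (x # L)" "set L \<subseteq> X" "x \<in> X"
  shows "eqv Plax (x # L @ replicate n x) (replicate n x @ x # L)"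
proof (induction n)
  case (Suc n)
  have "eqv Plax (x # L @ replicate n x @ [x]) (replicate n x @ x # L @ [x])"
    using cong_gen_context[OF Suc.IH, of "[]" "[x]"] by simp
  also have "eqv Plax \<dots> (replicate n x @ x # x # L)"
    using cong_gen_context[OF cong_gen_sym[OF plax_shift_across_smaller[of L x x]],
        of "replicate n x" "[]"] assms
    by simp
  finally show ?case by (simp add: replicate_append_same[symmetric] del: replicate_append_same)
qed simp

lemma plax_decreasing_power:
  assumes D: "sorted_wrt (>) D" "set D \<subseteq> X" and "x \<in> set D"
  shows "eqv Plax (D @ replicate (\<sigma> x - 1) x) D"
proof -
  obtain U L where D_eq: "D = U @ x # L" using split_list[OF \<open>x \<in> set D\<close>] by blast
  with D have sorted: "sorted_wrt (>) (x # L)" and X: "set L \<subseteq> X" "x \<in> X"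
    by (auto simp: sorted_wrt_append)
  have rep: "replicate (\<sigma> x - 1) x @ x # L = replicate (\<sigma> x) x @ L"
    using Cons_replicate_pred_period[OF \<open>x \<in> X\<close>] by (metis append_Cons replicate_app_Cons_same)
  have "eqv Plax (D @ replicate (\<sigma> x - 1) x) (U @ replicate (\<sigma> x - 1) x @ x # L)"
    using cong_gen_context[OF plax_gather_copies[OF sorted X, of "\<sigma> x - 1"], of U "[]"] D_eq
    by simp
  also have "\<dots> = U @ replicate (\<sigma> x) x @ L" by (simp only: rep)
  also have "eqv Plax \<dots> (U @ [x] @ L)"
    using cong_gen_context[OF eqv_power[OF \<open>x \<in> X\<close>]] .
  finally show ?thesis using D_eq by simp
qed

lemma plax_swap_past_pair:
  assumes X: "x \<in> X" "w \<in> X" "y \<in> X" and "x < w" "w \<le> y"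
  shows "eqv Plax [w, x, x, y] [w, y, x, x]"
proof (rule eqv_cancel_square[OF \<open>w \<in> X\<close>])
  have wxx: "eqv Plax [w, x, x] [x, w, x]" using cong_gen_sym[OF eqv_plax_acb[of x x w]] assms by auto
  have wxy: "eqv Plax [w, x, y] [w, y, x]" using eqv_plax_bac[of x w y] assms by auto
  have wxw: "eqv Plax [w, x, w] [w, w, x]" using eqv_plax_bac[of x w w] assms by auto
  have "eqv Plax [w, w, x, x, y] [w, x, w, x, y]" using cong_gen_context[OF wxx, of "[w]" "[y]"] by simp
  also have "eqv Plax \<dots> [w, x, w, y, x]" using cong_gen_context[OF wxy, of "[w, x]" "[]"] by simp
  also have "eqv Plax \<dots> [w, w, x, y, x]" using cong_gen_context[OF wxw, of "[]" "[y, x]"] by simp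
  also have "eqv Plax \<dots> [w, w, y, x, x]" using cong_gen_context[OF wxy, of "[w]" "[x]"] by simp
  finally show "eqv Plax [w, w, x, x, y] [w, w, y, x, x]" .
qed

lemma plax_decreasing_commute_less:
  assumes D: "sorted_wrt (>) D" "set D \<subseteq> X" and xy: "x \<in> set D" "y \<in> set D" "x < y"
  shows "eqv Plax (D @ [x, y]) (D @ [y, x])"
proof -
  obtain P L where DP: "D = P @ x # L" using split_list[OF xy(1)] by blast
  have "y \<in> set P" using xy D(1) DP by (auto simp: sorted_wrt_append)
  then obtain U w where "P = U @ [w]" by (cases P rule: rev_cases) auto
  with DP have D_eq: "D = U @ w # x # L" by simp
  with D have sorted: "sorted_wrt (>) L" "\<forall>l\<in>set L. l < x" "x < w" "\<forall>u\<in>set U. w < u"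
    by (auto simp: sorted_wrt_append)
  have "w \<le> y" using \<open>y \<in> set P\<close> \<open>P = U @ [w]\<close> sorted(4) by auto
  have X: "set L \<subseteq> X" "x \<in> X" "w \<in> X" "y \<in> X" using D(2) D_eq xy by auto
  have xx: "eqv Plax (x # L @ [x]) (x # x # L)"
    using cong_gen_sym[OF plax_shift_across_smaller[OF sorted(1) X(1,2,2)]] sorted by auto
  have xy': "eqv Plax (x # L @ [y]) (x # y # L)"
    using cong_gen_sym[OF plax_shift_across_smaller[OF sorted(1) X(1,2,4)]] sorted xy by auto
  have "eqv Plax (D @ [x, y]) (U @ [w] @ (x # x # L) @ [y])"
    using cong_gen_context[OF xx, of "U @ [w]" "[y]"] D_eq by simp
  also have "eqv Plax \<dots> (U @ [w, x] @ (x # y # L))"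
    using cong_gen_context[OF xy', of "U @ [w, x]" "[]"] by simp
  also have "eqv Plax \<dots> (U @ [w, y, x, x] @ L)"
    using cong_gen_context[OF plax_swap_past_pair[OF X(2,3,4) sorted(3) \<open>w \<le> y\<close>], of U L] by simp
  finally have xy_side: "eqv Plax (D @ [x, y]) (U @ [w, y, x, x] @ L)" .
  have "eqv Plax (D @ [y, x]) (U @ [w] @ (x # y # L) @ [x])"
    using cong_gen_context[OF xy', of "U @ [w]" "[x]"] D_eq by simp
  also have "eqv Plax \<dots> (U @ [w, y, x] @ L @ [x])"
    using cong_gen_context[OF eqv_plax_bac[of x w y], of U "L @ [x]"] X sorted \<open>w \<le> y\<close> by simp
  also have "eqv Plax \<dots> (U @ [w, y] @ (x # x # L))"
    using cong_gen_context[OF xx, of "U @ [w, y]" "[]"] by simp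
  finally have "eqv Plax (D @ [y, x]) (U @ [w, y, x, x] @ L)" by simp
  with xy_side show ?thesis by (blast intro: cong_gen_trans cong_gen_sym)
qed

lemma plax_decreasing_commute:
  assumes "sorted_wrt (>) D" "set D \<subseteq> X" "x \<in> set D" "y \<in> set D"
  shows "eqv Plax (D @ [x, y]) (D @ [y, x])"
  using plax_decreasing_commute_less[OF assms] plax_decreasing_commute_less[OF assms(1,2,4,3)]
  by (cases x y rule: linorder_cases) (auto intro: cong_gen_sym)

lemma eqv_column_insert:
  assumes T: "finite T" "T \<subseteq> X" and t: "t \<in> X"
  shows "\<exists>R. eqv Plax (t # column T) (column (column_insert t T) @ R)"
proof (cases "\<forall>y\<in>T. y < t")
  case True
  then have "sorted_wrt (>) (t # column T)" using T by (simp add: sorted_column set_column)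
  then have "column (set (t # column T)) = t # column T" by (rule column_set)
  then have "column (column_insert t T) @ [] = t # column T"
    using True T(1) by (simp add: column_insert_def set_column)
  then show ?thesis by (metis cong_gen_refl)
next
  case False
  define s where "s = Min {y\<in>T. t \<le> y}"
  note s = column_insert_bumped[OF T(1) False, folded s_def]
  define U L where "U = column {y\<in>T. s < y}" and "L = column {y\<in>T. y < s}"
  have "finite {y\<in>T. s < y}" "finite {y\<in>T. y < s}" using T(1) by (auto intro: finite_subset[of _ T])
  then have sorted: "sorted_wrt (>) U" "sorted_wrt (>) L"
    and U: "set U = {y\<in>T. s < y}" and L: "set L = {y\<in>T. y < s}"
    unfolding U_def L_def by (simp_all only: sorted_column set_column)
  have UL: "\<forall>u\<in>set U. s < u" "\<forall>l\<in>set L. l < t" "set U \<subseteq> X" "set L \<subseteq> X"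
    using s(3) T(2) unfolding U L by auto
  have sX: "s \<in> X" using s(1) T(2) by auto
  have "column T = U @ s # L" using column_split[OF T(1) s(1)] by (simp add: U_def L_def)
  moreover have "column (column_insert t T) = U @ t # L"
    using column_column_insert_bumped[OF T(1) False] by (simp add: U_def L_def s_def)
  moreover have "eqv Plax (t # U @ s # L) (U @ t # L @ [s])"
  proof -
    have "eqv Plax (t # U @ [s] @ L) (U @ [t, s] @ L)"
      using cong_gen_context[OF plax_shift_across_larger[OF sorted(1) UL(3) t sX], of "[]" L] s UL
      by auto
    also have "eqv Plax \<dots> (U @ t # L @ [s])"
      using cong_gen_context[OF plax_shift_across_smaller[OF sorted(2) UL(4) t sX], of U "[]"] s UL
      by auto
    finally show ?thesis by simp
  qed
  ultimately show ?thesis by auto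
qed

lemma eqv_column_insert_word:
  assumes T: "finite T" "T \<subseteq> X"
  shows "set v \<subseteq> X \<Longrightarrow> \<exists>R. eqv Plax (v @ column T) (column (foldr column_insert v T) @ R)"
proof (induction v)
  case (Cons t v)
  then obtain R1 where R1: "eqv Plax (v @ column T) (column (foldr column_insert v T) @ R1)"
    by auto
  have "finite (foldr column_insert v T)" "foldr column_insert v T \<subseteq> X"
    using finite_foldr_column_insert[OF T(1)] foldr_column_insert_subset[of v T] Cons.prems T
    by auto
  then obtain R2 where R2: "eqv Plax (t # column (foldr column_insert v T))
      (column (column_insert t (foldr column_insert v T)) @ R2)"
    using eqv_column_insert Cons.prems by fastforce
  have "eqv Plax ((t # v) @ column T) (t # column (foldr column_insert v T) @ R1)"
    using cong_gen_context[OF R1, of "[t]" "[]"] by simp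
  also have "eqv Plax \<dots> (column (foldr column_insert (t # v) T) @ R2 @ R1)"
    using cong_gen_context[OF R2, of "[]" R1] by simp
  finally show ?case by blast
next
  case Nil
  have "eqv Plax ([] @ column T) (column (foldr column_insert [] T) @ [])" by simp
  then show ?case by blast
qed

lemma plax_idempotent_column_factor:
  assumes "set e \<subseteq> X" "eqv Plax (e @ e) e"
  shows "\<exists>R. eqv Plax e (column (set e) @ R)"
proof (cases "e = []")
  case True
  then have "eqv Plax e (column (set e) @ [])" by (simp add: column_def)
  then show ?thesis ..
next
  case False
  define B k where "B = set e" and "k = card B"
  have "finite B" "0 < k" using False by (simp_all add: B_def k_def card_gt_0_iff)
  define v where "v = concat (replicate k e)"
  define Tk where "Tk = foldr column_insert v {}"
  have "set v = B" using \<open>0 < k\<close> by (simp add: v_def B_def)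
  obtain R where R: "eqv Plax (v @ column {}) (column Tk @ R)"
    using eqv_column_insert_word[of "{}" v] assms(1) \<open>set v = B\<close> by (auto simp: B_def Tk_def)
  have "Tk \<subseteq> B" using foldr_column_insert_subset[of v "{}"] \<open>set v = B\<close> by (simp add: Tk_def)
  have "B \<noteq> {}" using False by (simp add: B_def)
  then have "{y\<in>B. y \<le> Max B} = B" using \<open>finite B\<close> by auto
  moreover have "min k (card {y\<in>B. y \<le> Max B}) \<le> card {y\<in>Tk. y \<le> Max B}"
    using bspec[OF card_le_column_insert_powers[OF B_def[symmetric], of k]
        Max_in[OF \<open>finite B\<close> \<open>B \<noteq> {}\<close>]]
    by (simp only: Tk_def v_def)
  ultimately have "k \<le> card {y\<in>Tk. y \<le> Max B}" by (simp add: k_def)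
  also have "\<dots> \<le> card Tk" using finite_subset[OF \<open>Tk \<subseteq> B\<close> \<open>finite B\<close>] by (intro card_mono) auto
  finally have "Tk = B" using \<open>Tk \<subseteq> B\<close> \<open>finite B\<close> by (simp add: k_def card_seteq)
  have "eqv Plax e v" unfolding v_def using cong_gen_idem_power[OF assms(2) \<open>0 < k\<close>] by (rule cong_gen_sym)
  also have "eqv Plax v (column B @ R)" using R \<open>Tk = B\<close> by (simp add: column_def)
  finally show ?thesis unfolding B_def ..
qed

end

section \<open>Zigzag words in the Chinese monoid\<close>

function zigzag :: "'a list \<Rightarrow> 'a list" where
  "zigzag xs = (if length xs \<le> 1 then xs else last xs # hd xs # zigzag (butlast (tl xs)))"
  by auto
termination by (relation "measure length") auto

declare zigzag.simps [simp del]

lemma zigzag_Nil [simp]: "zigzag [] = []"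
  by (simp add: zigzag.simps)

lemma zigzag_single [simp]: "zigzag [x] = [x]"
  by (simp add: zigzag.simps)

lemma zigzag_ends [simp]: "zigzag (a # M @ [c]) = c # a # zigzag M"
  by (subst zigzag.simps) simp

lemma list_ends_induct [case_names Nil single ends]:
  assumes "P []" "\<And>x. P [x]" "\<And>a M c. P M \<Longrightarrow> P (a # M @ [c])"
  shows "P xs"
proof (induction "length xs" arbitrary: xs rule: less_induct)
  case less
  show ?case
  proof (cases xs)
    case (Cons a ys)
    then show ?thesis
      using assms(2,3) less by (cases ys rule: rev_cases) auto
  qed (simp add: assms(1))
qed

lemma set_zigzag [simp]: "set (zigzag xs) = set xs"
  by (induction xs rule: list_ends_induct) auto

lemma mset_zigzag [simp]: "mset (zigzag xs) = mset xs"
  by (induction xs rule: list_ends_induct) auto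

lemma sorted_ends:
  assumes "sorted_wrt (<) (a # M @ [c])"
  shows "sorted_wrt (<) M" "a < c" "\<forall>z\<in>set M. a < z \<and> z < c"
  using assms by (auto simp: sorted_wrt_append)

lemma split_list_segment:
  assumes "c \<in> set w1" "a \<in> set w2"
  shows "\<exists>x s y. w1 @ w2 = x @ [c] @ s @ [a] @ y \<and> c \<notin> set s \<and> a \<notin> set s"
proof -
  obtain p q where w2: "w2 = p @ a # q" "a \<notin> set p" using split_list_first[OF assms(2)] by blast
  have "c \<in> set (w1 @ p)" using assms(1) by simp
  then obtain x r where r: "w1 @ p = x @ c # r" "c \<notin> set r" using split_list_last by metis
  show ?thesis
  proof (cases "a \<in> set r")
    case True
    then obtain r1 r2 where r1: "r = r1 @ a # r2" "a \<notin> set r1" using split_list_first by metis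
    have "w1 @ w2 = x @ [c] @ r1 @ [a] @ (r2 @ a # q)" using w2 r r1 by simp
    then show ?thesis using r r1 by (intro exI) auto
  next
    case False
    have "w1 @ w2 = x @ [c] @ r @ [a] @ q" using w2 r by simp
    then show ?thesis using r False by (intro exI) auto
  qed
qed

context periodic_generators
begin

lemma eqv_ch_pair_central:
  assumes "a \<in> X" "c \<in> X" "a < c"
  shows "central_word (M_rels Ch X \<sigma>) {z\<in>X. a \<le> z \<and> z \<le> c} [c, a]"
  unfolding central_word_def
proof (intro ballI)
  fix x assume x: "x \<in> {z\<in>X. a \<le> z \<and> z \<le> c}"
  consider "x = a" | "x = c" | "a < x" "x < c" using x by (auto simp: order.order_iff_strict)
  then show "eqv Ch (x # [c, a]) ([c, a] @ [x])"
  proof cases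
    case 1 then show ?thesis using eqv_ch_aba[of a c] assms by simp
  next
    case 2 then show ?thesis using eqv_ch_bba[of a c] assms by simp
  next
    case 3 then show ?thesis using cong_gen_sym[OF eqv_ch_cab[of a x c]] assms x by simp
  qed
qed

lemma eqv_ch_caay:
  assumes "a \<in> X" "c \<in> X" "y \<in> X" "a < y" "y < c"
  shows "eqv Ch [c, a, a, y] [c, a, y, a]"
proof (rule eqv_cancel_square[OF \<open>c \<in> X\<close>])
  have caa: "eqv Ch [c, a, a] [a, c, a]" using cong_gen_sym[OF eqv_ch_aba[of a c]] assms by auto
  have cay: "eqv Ch [c, a, y] [c, y, a]" using cong_gen_sym[OF eqv_ch_cba[of a y c]] assms by auto
  have cac: "eqv Ch [c, a, c] [c, c, a]" using cong_gen_sym[OF eqv_ch_bba[of a c]] assms by auto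
  have "eqv Ch [c, c, a, a, y] [c, a, c, a, y]" using cong_gen_context[OF caa, of "[c]" "[y]"] by simp
  also have "eqv Ch \<dots> [c, a, c, y, a]" using cong_gen_context[OF cay, of "[c, a]" "[]"] by simp
  also have "eqv Ch \<dots> [c, c, a, y, a]" using cong_gen_context[OF cac, of "[]" "[y, a]"] by simp
  finally show "eqv Ch [c, c, a, a, y] [c, c, a, y, a]" .
qed

lemma eqv_ch_cacy:
  assumes "a \<in> X" "c \<in> X" "y \<in> X" "a < y" "y < c"
  shows "eqv Ch [c, a, c, y] [c, a, y, c]"
proof (rule eqv_cancel_square[OF \<open>c \<in> X\<close>])
  have cca: "eqv Ch [c, c, a] [c, a, c]" using eqv_ch_bba[of a c] assms by auto
  have ccy: "eqv Ch [c, c, y] [c, y, c]" using eqv_ch_bba[of y c] assms by auto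
  have "eqv Ch [c, c, a, c, y] [c, a, c, c, y]" using cong_gen_context[OF cca, of "[]" "[c, y]"] by simp
  also have "eqv Ch \<dots> [c, a, c, y, c]" using cong_gen_context[OF ccy, of "[c, a]" "[]"] by simp
  also have "eqv Ch \<dots> [c, c, a, y, c]"
    using cong_gen_context[OF cong_gen_sym[OF cca], of "[]" "[y, c]"] by simp
  finally show "eqv Ch [c, c, a, c, y] [c, c, a, y, c]" .
qed

lemma eqv_ch_caac:
  assumes "a \<in> X" "c \<in> X" "a < c"
  shows "eqv Ch [c, a, a, c] [c, a, c, a]"
proof (rule eqv_cancel_square[OF \<open>c \<in> X\<close>])
  have caa: "eqv Ch [c, a, a] [a, c, a]" using cong_gen_sym[OF eqv_ch_aba[of a c]] assms by auto
  have cac: "eqv Ch [c, a, c] [c, c, a]" using cong_gen_sym[OF eqv_ch_bba[of a c]] assms by auto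
  have "eqv Ch [c, c, a, a, c] [c, a, c, a, c]" using cong_gen_context[OF caa, of "[c]" "[c]"] by simp
  also have "eqv Ch \<dots> [c, a, c, c, a]" using cong_gen_context[OF cac, of "[c, a]" "[]"] by simp
  also have "eqv Ch \<dots> [c, c, a, c, a]" using cong_gen_context[OF cac, of "[]" "[c, a]"] by simp
  finally show "eqv Ch [c, c, a, a, c] [c, c, a, c, a]" .
qed

lemma eqv_ch_pair_swap_extreme:
  assumes "a \<in> X" "c \<in> X" "y \<in> X" "a < c" "x = a \<or> x = c" "a \<le> y" "y \<le> c"
  shows "eqv Ch [c, a, x, y] [c, a, y, x]"
proof -
  consider "y = x" | "x = a" "y = c" | "x = c" "y = a" | "x = a" "a < y" "y < c"
    | "x = c" "a < y" "y < c"
    using assms by (auto simp: order.order_iff_strict)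
  then show ?thesis
  proof cases
    case 2 then show ?thesis using eqv_ch_caac[OF assms(1,2,4)] by simp
  next
    case 3 then show ?thesis using cong_gen_sym[OF eqv_ch_caac[OF assms(1,2,4)]] by simp
  next
    case 4 then show ?thesis using eqv_ch_caay[OF assms(1,2,3)] by simp
  next
    case 5 then show ?thesis using eqv_ch_cacy[OF assms(1,2,3)] by simp
  qed simp
qed

lemma eqv_ch_pair_commute:
  assumes "a \<in> X" "c \<in> X" "a < c" "\<forall>z\<in>set w. z \<in> X \<and> a \<le> z \<and> z \<le> c"
  shows "eqv Ch (w @ [c, a]) ([c, a] @ w)"
  using central_word_commute[OF eqv_ch_pair_central[OF assms(1-3)]] assms(4) by auto

lemma eqv_ch_pair_extreme_past:
  assumes "a \<in> X" "c \<in> X" "a < c" "x = a \<or> x = c"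
  shows "\<forall>z\<in>set N. z \<in> X \<and> a \<le> z \<and> z \<le> c \<Longrightarrow> eqv Ch ([c, a, x] @ N) ([c, a] @ N @ [x])"
proof (induction N)
  case (Cons y N)
  have "eqv Ch ([c, a, x] @ y # N) ([c, a, y, x] @ N)"
    using cong_gen_context[OF eqv_ch_pair_swap_extreme[OF assms(1,2) _ assms(3,4)], of y "[]" N]
      Cons.prems by simp
  also have "eqv Ch \<dots> ([y, c, a, x] @ N)"
    using cong_gen_context[OF cong_gen_sym[OF eqv_ch_pair_commute[OF assms(1-3), of "[y]"]],
        of "[]" "x # N"] Cons.prems by simp
  also have "eqv Ch \<dots> ([y, c, a] @ N @ [x])"
    using cong_gen_context[OF Cons.IH, of "[y]" "[]"] Cons.prems by simp
  also have "eqv Ch \<dots> ([c, a, y] @ N @ [x])"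
    using cong_gen_context[OF eqv_ch_pair_commute[OF assms(1-3), of "[y]"], of "[]" "N @ [x]"]
      Cons.prems by simp
  finally show ?case by simp
qed simp

lemma eqv_ch_pass_min:
  assumes "a \<in> X" "x \<in> X" "y \<in> X" "a < x" "a < y"
  shows "\<exists>y'. eqv Ch [x, y, a] [max x y, a, y']"
proof (cases x y rule: linorder_cases)
  case less
  then show ?thesis using cong_gen_sym[OF eqv_ch_cab[of a x y]] assms by auto
next
  case equal
  then show ?thesis using eqv_ch_bba[of a y] assms by auto
next
  case greater
  then show ?thesis using eqv_ch_cba[of a y x] assms by auto
qed

lemma eqv_ch_extract_min:
  "a \<in> X \<Longrightarrow> set (p # s) \<subseteq> X \<Longrightarrow> \<forall>z\<in>set (p # s). a < z \<Longrightarrow>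
   \<exists>s'. eqv Ch (p # s @ [a]) (Max (set (p # s)) # a # s')"
proof (induction s arbitrary: p)
  case Nil
  have "eqv Ch (p # [] @ [a]) (Max (set [p]) # a # [])" by simp
  then show ?case by blast
next
  case (Cons x s)
  have "\<exists>t. eqv Ch (x # s @ [a]) (Max (set (x # s)) # a # t)"
    using Cons.prems by (intro Cons.IH) auto
  then obtain t where t: "eqv Ch (x # s @ [a]) (Max (set (x # s)) # a # t)" ..
  have "Max (set (x # s)) \<in> set (x # s)" by (rule Max_in) simp_all
  with Cons.prems obtain y' where y': "eqv Ch [p, Max (set (x # s)), a]
      [max p (Max (set (x # s))), a, y']"
    using eqv_ch_pass_min[of a p "Max (set (x # s))"] by auto
  have "eqv Ch (p # (x # s) @ [a]) (p # Max (set (x # s)) # a # t)"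
    using cong_gen_context[OF t, of "[p]" "[]"] by simp
  also have "eqv Ch \<dots> (max p (Max (set (x # s))) # a # y' # t)"
    using cong_gen_context[OF y', of "[]" t] by simp
  also have "max p (Max (set (x # s))) = Max (set (p # x # s))"
    by (simp add: Max_insert max.commute)
  finally show ?case by blast
qed

lemma ch_zigzag_central:
  "sorted_wrt (<) L \<Longrightarrow> set L \<subseteq> X \<Longrightarrow> x \<in> set L \<Longrightarrow> eqv Ch (x # zigzag L) (zigzag L @ [x])"
proof (induction L arbitrary: x rule: list_ends_induct)
  case (ends a M c)
  note sorted = sorted_ends[OF ends.prems(1)]
  have X: "a \<in> X" "c \<in> X" "set M \<subseteq> X" "x \<in> X" using ends.prems by auto
  have M: "\<forall>z\<in>set (zigzag M). z \<in> X \<and> a \<le> z \<and> z \<le> c" using sorted X by auto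
  have "a \<le> x" "x \<le> c" using ends.prems(3) sorted by auto
  then have "eqv Ch (x # c # a # zigzag M) (c # a # x # zigzag M)"
    using cong_gen_context[OF eqv_ch_pair_commute[OF X(1,2) sorted(2), of "[x]"], of "[]" "zigzag M"] X
    by simp
  also have "eqv Ch \<dots> (c # a # zigzag M @ [x])"
  proof (cases "x \<in> set M")
    case True
    then show ?thesis
      using cong_gen_context[OF ends.IH[OF sorted(1) X(3) True], of "[c, a]" "[]"] by simp
  next
    case False
    then have "x = a \<or> x = c" using ends.prems(3) by auto
    then show ?thesis using eqv_ch_pair_extreme_past[OF X(1,2) sorted(2)] M by simp
  qed
  finally show ?case by simp
qed simp_all

lemma ch_zigzag_commute:
  "sorted_wrt (<) L \<Longrightarrow> set L \<subseteq> X \<Longrightarrow> x \<in> set L \<Longrightarrow> y \<in> set L \<Longrightarrow>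
   eqv Ch (zigzag L @ [x, y]) (zigzag L @ [y, x])"
proof (induction L arbitrary: x y rule: list_ends_induct)
  case (ends a M c)
  note sorted = sorted_ends[OF ends.prems(1)]
  have X: "a \<in> X" "c \<in> X" "set M \<subseteq> X" "x \<in> X" "y \<in> X" using ends.prems by auto
  have M: "\<forall>z\<in>set (zigzag M). z \<in> X \<and> a \<le> z \<and> z \<le> c" using sorted X by auto
  have xy: "a \<le> x" "x \<le> c" "a \<le> y" "y \<le> c" using ends.prems(3,4) sorted by auto
  show ?case
  proof (cases "x \<in> set M \<and> y \<in> set M")
    case True
    then show ?thesis
      using cong_gen_context[OF ends.IH[OF sorted(1) X(3), of x y], of "[c, a]" "[]"] by simp
  next
    case False
    have pair: "eqv Ch ([c, a] @ zigzag M) (zigzag M @ [c, a])"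
      using cong_gen_sym[OF eqv_ch_pair_commute[OF X(1,2) sorted(2) M]] .
    have swap: "eqv Ch [c, a, x, y] [c, a, y, x]"
    proof (cases "x = a \<or> x = c")
      case True
      then show ?thesis using eqv_ch_pair_swap_extreme[OF X(1,2,5) sorted(2) True xy(3,4)] by simp
    next
      case False
      then have "y = a \<or> y = c" using \<open>\<not> (x \<in> set M \<and> y \<in> set M)\<close> ends.prems(3,4) by auto
      then show ?thesis
        using cong_gen_sym[OF eqv_ch_pair_swap_extreme[OF X(1,2,4) sorted(2) _ xy(1,2)]] by blast
    qed
    have "eqv Ch ([c, a] @ zigzag M @ [x, y]) (zigzag M @ [c, a] @ [x, y])"
      using cong_gen_context[OF pair, of "[]" "[x, y]"] by simp
    also have "eqv Ch \<dots> (zigzag M @ [c, a] @ [y, x])"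
      using cong_gen_context[OF swap, of "zigzag M" "[]"] by simp
    also have "eqv Ch \<dots> ([c, a] @ zigzag M @ [y, x])"
      using cong_gen_context[OF cong_gen_sym[OF pair], of "[]" "[y, x]"] by simp
    finally show ?thesis by simp
  qed
qed simp_all

lemma eqv_ch_pair_replicate_max:
  assumes "a \<in> X" "c \<in> X" "a < c"
  shows "eqv Ch ([c, a] @ replicate n c) (c # replicate n c @ [a])"
proof (induction n)
  case (Suc n)
  have cac: "eqv Ch [c, a, c] [c, c, a]" using cong_gen_sym[OF eqv_ch_bba[of a c]] assms by auto
  have "eqv Ch ([c, a] @ replicate n c @ [c]) (c # replicate n c @ [a, c])"
    using cong_gen_context[OF Suc.IH, of "[]" "[c]"] by simp
  also have "eqv Ch \<dots> (c # replicate n c @ [c, a])"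
    using cong_gen_context[OF cac, of "replicate n c" "[]"] by (simp add: replicate_app_Cons_same)
  finally show ?case by (simp add: replicate_append_same[symmetric] del: replicate_append_same)
qed simp

lemma eqv_ch_pair_power:
  assumes "a \<in> X" "c \<in> X" "a < c" "x = a \<or> x = c"
  shows "eqv Ch ([c, a] @ replicate (\<sigma> x - 1) x) [c, a]"
  using assms(4)
proof
  assume "x = a"
  then show ?thesis
    using cong_gen_context[OF eqv_power[OF \<open>a \<in> X\<close>, of Ch], of "[c]" "[]"]
      Cons_replicate_pred_period[OF \<open>a \<in> X\<close>]
    by simp
next
  assume "x = c"
  have "eqv Ch ([c, a] @ replicate (\<sigma> c - 1) c) (replicate (\<sigma> c) c @ [a])"
    using eqv_ch_pair_replicate_max[OF assms(1-3)] Cons_replicate_pred_period[OF \<open>c \<in> X\<close>]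
    by (metis append_Cons)
  also have "eqv Ch \<dots> [c, a]"
    using cong_gen_context[OF eqv_power[OF \<open>c \<in> X\<close>, of Ch], of "[]" "[a]"] by simp
  finally show ?thesis using \<open>x = c\<close> by simp
qed

lemma ch_zigzag_power:
  "sorted_wrt (<) L \<Longrightarrow> set L \<subseteq> X \<Longrightarrow> x \<in> set L \<Longrightarrow>
   eqv Ch (zigzag L @ replicate (\<sigma> x - 1) x) (zigzag L)"
proof (induction L arbitrary: x rule: list_ends_induct)
  case (single z)
  then show ?case using eqv_power[of z Ch] Cons_replicate_pred_period[of z] by simp
next
  case (ends a M c)
  note sorted = sorted_ends[OF ends.prems(1)]
  have X: "a \<in> X" "c \<in> X" "set M \<subseteq> X" using ends.prems by auto
  have M: "\<forall>z\<in>set (zigzag M). z \<in> X \<and> a \<le> z \<and> z \<le> c" using sorted X by auto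
  show ?case
  proof (cases "x \<in> set M")
    case True
    then show ?thesis
      using cong_gen_context[OF ends.IH[OF sorted(1) X(3) True], of "[c, a]" "[]"] by simp
  next
    case False
    then have "x = a \<or> x = c" using ends.prems(3) by auto
    have pair: "eqv Ch ([c, a] @ zigzag M) (zigzag M @ [c, a])"
      using cong_gen_sym[OF eqv_ch_pair_commute[OF X(1,2) sorted(2) M]] .
    have "eqv Ch ([c, a] @ zigzag M @ replicate (\<sigma> x - 1) x)
        (zigzag M @ [c, a] @ replicate (\<sigma> x - 1) x)"
      using cong_gen_context[OF pair, of "[]" "replicate (\<sigma> x - 1) x"] by simp
    also have "eqv Ch \<dots> (zigzag M @ [c, a])"
      using cong_gen_context[OF eqv_ch_pair_power[OF X(1,2) sorted(2) \<open>x = a \<or> x = c\<close>],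
          of "zigzag M" "[]"] by simp
    also have "eqv Ch \<dots> ([c, a] @ zigzag M)" by (rule cong_gen_sym[OF pair])
    finally show ?thesis by simp
  qed
qed simp

lemma ch_central_append_pair:
  assumes sorted: "sorted_wrt (<) (a # M @ [c])" and "set (a # M @ [c]) \<subseteq> S" "S \<subseteq> X"
    and central: "central_word (M_rels Ch X \<sigma>) S Z"
    and comm: "commuting_after (M_rels Ch X \<sigma>) Z (S - set (a # M @ [c])) S"
  shows "central_word (M_rels Ch X \<sigma>) S (Z @ [c, a])"
  unfolding central_word_def
proof
  fix x assume "x \<in> S"
  have ac: "a \<in> S" "c \<in> S" "a \<in> X" "c \<in> X" "a < c" using assms(2,3) sorted_ends[OF sorted] by auto
  have Zx: "eqv Ch (x # Z) (Z @ [x])" and Zc: "eqv Ch (c # Z) (Z @ [c])"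
    using central \<open>x \<in> S\<close> ac by (auto simp: central_word_def)
  have "eqv Ch (x # Z @ [c, a]) (Z @ [x, c, a])"
    using cong_gen_context[OF Zx, of "[]" "[c, a]"] by simp
  also have "eqv Ch \<dots> ((Z @ [c, a]) @ [x])"
  proof (cases "a \<le> x \<and> x \<le> c")
    case True
    then show ?thesis
      using cong_gen_context[OF eqv_ch_pair_commute[OF ac(3-5), of "[x]"], of Z "[]"]
        \<open>x \<in> S\<close> assms(3) by auto
  next
    case False
    then have out: "x \<in> S - set (a # M @ [c])" using \<open>x \<in> S\<close> sorted_ends[OF sorted] by auto
    have xc: "eqv Ch (Z @ [x, c]) (Z @ [c, x])" and xa: "eqv Ch (Z @ [x, a]) (Z @ [a, x])"
      using comm out ac by (auto simp: commuting_after_def)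
    have "eqv Ch (Z @ [x, c, a]) (Z @ [c, x, a])" using cong_gen_context[OF xc, of "[]" "[a]"] by simp
    also have "eqv Ch \<dots> (c # Z @ [x, a])"
      using cong_gen_context[OF cong_gen_sym[OF Zc], of "[]" "[x, a]"] by simp
    also have "eqv Ch \<dots> (c # Z @ [a, x])" using cong_gen_context[OF xa, of "[c]" "[]"] by simp
    also have "eqv Ch \<dots> (Z @ [c, a, x])" using cong_gen_context[OF Zc, of "[]" "[a, x]"] by simp
    finally show ?thesis by simp
  qed
  finally show "eqv Ch (x # Z @ [c, a]) ((Z @ [c, a]) @ [x])" .
qed

lemma ch_commuting_after_append_pair:
  assumes sorted: "sorted_wrt (<) (a # M @ [c])" and "set (a # M @ [c]) \<subseteq> S" "S \<subseteq> X"
    and central: "central_word (M_rels Ch X \<sigma>) S Z"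
    and comm: "commuting_after (M_rels Ch X \<sigma>) Z (S - set (a # M @ [c])) S"
  shows "commuting_after (M_rels Ch X \<sigma>) (Z @ [c, a]) (S - set M) S"
  unfolding commuting_after_def
proof (intro ballI)
  have ac: "a \<in> X" "c \<in> X" "a < c" using assms(2,3) sorted_ends[OF sorted] by auto
  have outer: "commuting_after (M_rels Ch X \<sigma>) (Z @ [c, a]) (S - set (a # M @ [c])) S"
    using commuting_after_append_central[OF central _ comm] assms(2) by simp
  fix x y assume x: "x \<in> S - set M" and "y \<in> S"
  show "eqv Ch ((Z @ [c, a]) @ [x, y]) ((Z @ [c, a]) @ [y, x])"
  proof (cases "x \<in> set (a # M @ [c]) \<and> y \<in> set (a # M @ [c])")
    case True
    then have "x = a \<or> x = c" "a \<le> y" "y \<le> c" "y \<in> X"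
      using x sorted_ends[OF sorted] assms(2,3) by auto
    then show ?thesis
      using cong_gen_context[OF eqv_ch_pair_swap_extreme[OF ac(1,2) _ ac(3)], of y x Z "[]"] by simp
  next
    case False
    then consider "x \<in> S - set (a # M @ [c])" | "y \<in> S - set (a # M @ [c])"
      using x \<open>y \<in> S\<close> by auto
    then show ?thesis
    proof cases
      case 1
      with outer \<open>y \<in> S\<close> show ?thesis by (simp add: commuting_after_def)
    next
      case 2
      with outer x have "eqv Ch ((Z @ [c, a]) @ [y, x]) ((Z @ [c, a]) @ [x, y])"
        by (simp add: commuting_after_def)
      then show ?thesis by (rule cong_gen_sym)
    qed
  qed
qed

lemma idempotent_segment_factor:
  assumes idem: "eqv M (e @ e) e" and central: "central_word (M_rels M X \<sigma>) (set e) Z"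
    and factor: "eqv M e (u @ Z @ v)" and "a \<in> set e" "c \<in> set e"
  shows "\<exists>u' s v'. eqv M e (u' @ Z @ c # s @ a # v') \<and> c \<notin> set s \<and> a \<notin> set s \<and> set s \<subseteq> set e"
proof -
  obtain x s y where seg: "e @ e = x @ [c] @ s @ [a] @ y" "c \<notin> set s" "a \<notin> set s"
    using split_list_segment[OF \<open>c \<in> set e\<close> \<open>a \<in> set e\<close>] by blast
  have sub: "set v \<subseteq> set e" "set x \<subseteq> set e" "set s \<subseteq> set e"
    using eqv_set_eq[OF factor] arg_cong[OF seg(1), of set] by auto
  have "eqv M e (e @ e)" using cong_gen_sym[OF idem] .
  also have "eqv M \<dots> (e @ e @ e)"
    using cong_gen_context[OF cong_gen_sym[OF idem], of e "[]"] by simp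
  also have "eqv M \<dots> (u @ Z @ v @ x @ [c] @ s @ [a] @ y)"
    using cong_gen_context[OF factor, of "[]" "e @ e"] seg(1) by simp
  also have "eqv M \<dots> (u @ (v @ x) @ Z @ c # s @ a # y)"
    using cong_gen_context[OF cong_gen_sym[OF central_word_commute[OF central, of "v @ x"]],
        of u "c # s @ a # y"] sub by simp
  finally show ?thesis using seg(2,3) sub(3) by (metis append.assoc)
qed

lemma ch_idempotent_extract_pair:
  assumes e: "set e \<subseteq> X" "eqv Ch (e @ e) e"
    and sorted: "sorted_wrt (<) (a # M @ [c])" and L: "set (a # M @ [c]) \<subseteq> set e"
    and central: "central_word (M_rels Ch X \<sigma>) (set e) Z"
    and comm: "commuting_after (M_rels Ch X \<sigma>) Z (set e - set (a # M @ [c])) (set e)"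
    and factor: "eqv Ch e (u @ Z @ v)"
  shows "\<exists>u' v'. eqv Ch e (u' @ Z @ [c, a] @ v')"
proof -
  define Out where "Out = set e - set (a # M @ [c])"
  have ac: "a \<in> set e" "c \<in> set e" "a \<in> X" "c \<in> X" "a < c"
    using L e(1) sorted_ends[OF sorted] by auto
  obtain u' s v' where seg: "eqv Ch e (u' @ Z @ c # s @ a # v')" "c \<notin> set s" "a \<notin> set s"
    "set s \<subseteq> set e"
    using idempotent_segment_factor[OF e(2) central factor ac(1,2)] by blast
  define s_in s_out where "s_in = filter (\<lambda>z. z \<notin> Out) s" and "s_out = filter (\<lambda>z. z \<in> Out) s"
  have "set (c # s @ [a]) \<subseteq> set e" using seg(4) ac by auto
  then have "eqv Ch (Z @ c # s @ [a])
      (Z @ filter (\<lambda>z. z \<notin> Out) (c # s @ [a]) @ filter (\<lambda>z. z \<in> Out) (c # s @ [a]))"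
    by (rule commuting_after_filter[OF central comm[folded Out_def]])
  moreover have "a \<notin> Out" "c \<notin> Out" by (simp_all add: Out_def)
  ultimately have filtered: "eqv Ch (Z @ c # s @ [a]) (Z @ (c # s_in @ [a]) @ s_out)"
    by (simp add: s_in_def s_out_def)
  have s_in: "\<forall>z\<in>set s_in. z \<in> X \<and> a < z \<and> z < c"
    using seg(2-4) e(1) sorted_ends[OF sorted] by (auto simp: s_in_def Out_def)
  then have "Max (set (c # s_in)) = c" by (intro Max_eqI) auto
  with s_in ac obtain s' where min_first: "eqv Ch (c # s_in @ [a]) (c # a # s')"
    using eqv_ch_extract_min[of a c s_in] by auto
  note seg(1)
  also have "eqv Ch (u' @ Z @ c # s @ a # v') (u' @ Z @ (c # s_in @ [a]) @ s_out @ v')"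
    using cong_gen_context[OF filtered, of u' v'] by simp
  also have "eqv Ch \<dots> (u' @ Z @ [c, a] @ s' @ s_out @ v')"
    using cong_gen_context[OF min_first, of "u' @ Z" "s_out @ v'"] by simp
  finally show ?thesis by blast
qed

lemma ch_idempotent_zigzag_factor_gen:
  assumes e: "set e \<subseteq> X" "eqv Ch (e @ e) e"
  shows "sorted_wrt (<) L \<Longrightarrow> set L \<subseteq> set e \<Longrightarrow>
    central_word (M_rels Ch X \<sigma>) (set e) Z \<Longrightarrow>
    commuting_after (M_rels Ch X \<sigma>) Z (set e - set L) (set e) \<Longrightarrow>
    eqv Ch e (u @ Z @ v) \<Longrightarrow> \<exists>u' v'. eqv Ch e (u' @ Z @ zigzag L @ v')"
proof (induction L arbitrary: Z u v rule: list_ends_induct)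
  case Nil
  then show ?case by auto
next
  case (single x)
  obtain e1 e2 where e12: "e = e1 @ x # e2" using split_list single.prems(2) by fastforce
  have "set (v @ e1) \<subseteq> set e" using eqv_set_eq[OF single.prems(5)] e12 by auto
  have "eqv Ch e (e @ e)" using cong_gen_sym[OF e(2)] .
  also have "eqv Ch \<dots> (u @ Z @ v @ e)" using cong_gen_context[OF single.prems(5), of "[]" e] by simp
  also have "eqv Ch \<dots> (u @ (v @ e1) @ Z @ x # e2)"
    using cong_gen_context[OF cong_gen_sym[OF central_word_commute[OF single.prems(3)
          \<open>set (v @ e1) \<subseteq> set e\<close>]], of u "x # e2"] e12
    by simp
  finally show ?case by (intro exI[of _ "u @ v @ e1"] exI[of _ e2]) simp
next
  case (ends a M c)
  obtain u' v' where "eqv Ch e (u' @ Z @ [c, a] @ v')"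
    using ch_idempotent_extract_pair[OF e ends.prems(1,2,3,4,5)] by blast
  then have "eqv Ch e (u' @ (Z @ [c, a]) @ v')" by simp
  moreover have "central_word (M_rels Ch X \<sigma>) (set e) (Z @ [c, a])"
    using ch_central_append_pair[OF ends.prems(1,2) e(1) ends.prems(3,4)] .
  moreover have "commuting_after (M_rels Ch X \<sigma>) (Z @ [c, a]) (set e - set M) (set e)"
    using ch_commuting_after_append_pair[OF ends.prems(1,2) e(1) ends.prems(3,4)] .
  ultimately obtain u'' v'' where "eqv Ch e (u'' @ (Z @ [c, a]) @ zigzag M @ v'')"
    using ends.IH sorted_ends(1)[OF ends.prems(1)] ends.prems(2) by fastforce
  then show ?case by (intro exI[of _ u''] exI[of _ v'']) simp
qed

lemma ch_idempotent_zigzag_factor: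
  assumes "set e \<subseteq> X" "eqv Ch (e @ e) e"
  shows "\<exists>u v. eqv Ch e (u @ zigzag (sorted_list_of_set (set e)) @ v)"
  using ch_idempotent_zigzag_factor_gen[OF assms, of "sorted_list_of_set (set e)" "[]" "[]" e]
  by (simp add: central_word_def commuting_after_def)

end

definition core_word :: "monoid_kind \<Rightarrow> 'a::linorder set \<Rightarrow> 'a list" where
  "core_word M B = (case M of Plax \<Rightarrow> column B | Ch \<Rightarrow> zigzag (sorted_list_of_set B))"

definition pad_word :: "('a \<Rightarrow> nat) \<Rightarrow> 'a::linorder set \<Rightarrow> 'a list" where
  "pad_word \<sigma> B = concat (map (\<lambda>b. replicate (\<sigma> b - 2) b) (sorted_list_of_set B))"

definition idem_word :: "monoid_kind \<Rightarrow> ('a \<Rightarrow> nat) \<Rightarrow> 'a::linorder set \<Rightarrow> 'a list" where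
  "idem_word M \<sigma> B = core_word M B @ pad_word \<sigma> B"

lemma set_core_word: "finite B \<Longrightarrow> set (core_word M B) = B"
  by (cases M) (simp_all add: core_word_def set_column)

lemma count_core_word: "finite B \<Longrightarrow> count (mset (core_word M B)) y = (if y \<in> B then 1 else 0)"
  using count_concat_map_replicate[of "sorted_list_of_set B" "\<lambda>_. 1" y]
  by (cases M) (simp_all add: core_word_def column_def)

lemma set_pad_word: "finite B \<Longrightarrow> set (pad_word \<sigma> B) \<subseteq> B"
  by (auto simp: pad_word_def)

lemma count_pad_word: "finite B \<Longrightarrow> count (mset (pad_word \<sigma> B)) y = (if y \<in> B then \<sigma> y - 2 else 0)"
  by (simp add: pad_word_def count_concat_map_replicate)

lemma set_idem_word: "finite B \<Longrightarrow> set (idem_word M \<sigma> B) = B"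
  using set_core_word set_pad_word by (fastforce simp: idem_word_def)

lemma count_idem_word:
  assumes "finite B" "\<forall>b\<in>B. 2 \<le> \<sigma> b"
  shows "count (mset (idem_word M \<sigma> B)) y = (if y \<in> B then \<sigma> y - 1 else 0)"
proof (cases "y \<in> B")
  case True
  with assms(2) have "2 \<le> \<sigma> y" by blast
  with True assms(1) show ?thesis by (simp add: idem_word_def count_core_word count_pad_word)
qed (simp add: assms(1) idem_word_def count_core_word count_pad_word)

lemma mod_pred_of_dvd_Suc: "(q::nat) dvd Suc n \<Longrightarrow> n mod q = q - 1"
  by (metis diff_Suc_1 dvd_imp_mod_0 mod_Suc nat.distinct(1))

lemma inflation_refl: "inflation w w"
proof (induction w)
  case (Cons c w)
  then have "inflation (c # w) (replicate 1 c @ w)" by (intro inflation.intros(2)) simp_all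
  then show ?case by simp
qed (rule inflation.intros(1))

lemma Com_eqv_of_mset_eq:
  assumes "set u \<subseteq> A" "mset u = mset v"
  shows "cong_gen (Com_rels A \<sigma>) u v"
proof -
  have central: "central_word (Com_rels A \<sigma>) A []" by (simp add: central_word_def)
  have comm: "commuting_after (Com_rels A \<sigma>) [] A A"
    by (auto simp: commuting_after_def Com_rels_def intro!: cong_gen_rule)
  from central_word_perm[OF central comm assms] show ?thesis by simp
qed

lemma idem_word_Com_eqv_target_word:
  assumes "finite B" "B \<subseteq> A" "\<forall>b\<in>B. 2 \<le> \<sigma> b"
  shows "cong_gen (Com_rels A \<sigma>) (idem_word M \<sigma> B) (target_word B \<sigma>)"
proof (rule Com_eqv_of_mset_eq)
  show "set (idem_word M \<sigma> B) \<subseteq> A" using set_idem_word[OF assms(1)] assms(2) by simp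
  show "mset (idem_word M \<sigma> B) = mset (target_word B \<sigma>)"
    using assms(1) by (intro multiset_eqI)
      (simp add: count_idem_word[OF assms(1,3)] target_word_def count_concat_map_replicate)
qed

context periodic_generators
begin

lemma core_word_central: "finite B \<Longrightarrow> B \<subseteq> X \<Longrightarrow> central_word (M_rels M X \<sigma>) B (core_word M B)"
  using plax_decreasing_central[of "column B"] ch_zigzag_central[of "sorted_list_of_set B"]
  by (cases M) (auto simp: central_word_def core_word_def sorted_column set_column)

lemma core_word_commuting:
  "finite B \<Longrightarrow> B \<subseteq> X \<Longrightarrow> commuting_after (M_rels M X \<sigma>) (core_word M B) B B"
  using plax_decreasing_commute[of "column B"] ch_zigzag_commute[of "sorted_list_of_set B"]
  by (cases M) (auto simp: commuting_after_def core_word_def sorted_column set_column)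

lemma core_word_power:
  "finite B \<Longrightarrow> B \<subseteq> X \<Longrightarrow> x \<in> B \<Longrightarrow>
   eqv M (core_word M B @ replicate (\<sigma> x - 1) x) (core_word M B)"
  using plax_decreasing_power[of "column B"] ch_zigzag_power[of "sorted_list_of_set B"]
  by (cases M) (auto simp: core_word_def sorted_column set_column)

lemma core_word_mod_counts:
  assumes "finite B" "B \<subseteq> X" "set u \<subseteq> B" "set v \<subseteq> B"
    and "\<And>x. x \<in> B \<Longrightarrow> count (mset u) x mod (\<sigma> x - 1) = count (mset v) x mod (\<sigma> x - 1)"
  shows "eqv M (core_word M B @ u) (core_word M B @ v)"
  using central_word_mod_counts[OF assms(1) core_word_central[OF assms(1,2)]
      core_word_commuting[OF assms(1,2)] core_word_power[OF assms(1,2)] assms(3-5)] .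

lemma idempotent_core_word_factor:
  assumes "set e \<subseteq> X" "eqv M (e @ e) e"
  shows "\<exists>u v. eqv M e (u @ core_word M (set e) @ v)"
proof (cases M)
  case Plax
  obtain R where "eqv Plax e (column (set e) @ R)"
    using plax_idempotent_column_factor[OF assms[unfolded Plax]] ..
  then have "eqv M e ([] @ core_word M (set e) @ R)" by (simp add: Plax core_word_def)
  then show ?thesis by blast
next
  case Ch
  then show ?thesis using ch_idempotent_zigzag_factor[OF assms[unfolded Ch]]
    by (simp add: core_word_def)
qed

lemma idem_word_idempotent:
  assumes "finite B" "B \<subseteq> X"
  shows "eqv M (idem_word M \<sigma> B @ idem_word M \<sigma> B) (idem_word M \<sigma> B)"
proof -
  have "eqv M (core_word M B @ (pad_word \<sigma> B @ core_word M B @ pad_word \<sigma> B))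
      (core_word M B @ pad_word \<sigma> B)"
  proof (rule core_word_mod_counts[OF assms])
    show "set (pad_word \<sigma> B @ core_word M B @ pad_word \<sigma> B) \<subseteq> B" "set (pad_word \<sigma> B) \<subseteq> B"
      using set_pad_word[OF assms(1)] set_core_word[OF assms(1)] by auto
    fix x assume "x \<in> B"
    then have "2 \<le> \<sigma> x" using assms(2) period_ge_2 by auto
    have "count (mset (pad_word \<sigma> B @ core_word M B @ pad_word \<sigma> B)) x = (\<sigma> x - 2) + (\<sigma> x - 1)"
      using \<open>x \<in> B\<close> \<open>2 \<le> \<sigma> x\<close> assms(1) by (simp add: count_core_word count_pad_word)
    then show "count (mset (pad_word \<sigma> B @ core_word M B @ pad_word \<sigma> B)) x mod (\<sigma> x - 1) =
        count (mset (pad_word \<sigma> B)) x mod (\<sigma> x - 1)"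
      using \<open>x \<in> B\<close> assms(1) by (simp add: count_pad_word)
  qed
  then show ?thesis by (simp add: idem_word_def)
qed

lemma idempotent_eqv_idem_word:
  assumes "set w \<subseteq> X" and idem: "eqv M (w @ w) w"
  shows "eqv M w (idem_word M \<sigma> (set w))"
proof -
  define B D where "B = set w" and "D = core_word M B"
  have "finite B" "B \<subseteq> X" using assms(1) by (simp_all add: B_def)
  obtain u v where "eqv M w (u @ D @ v)"
    using idempotent_core_word_factor[OF assms] by (auto simp: B_def D_def)
  moreover have "set u \<subseteq> B" "set v \<subseteq> B" using eqv_set_eq[OF calculation] by (auto simp: B_def)
  ultimately have wg: "eqv M w (D @ u @ v)"
    using cong_gen_context[OF central_word_commute[OF core_word_central[OF \<open>finite B\<close> \<open>B \<subseteq> X\<close>]],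
        of u M "[]" v]
    by (auto simp: D_def intro: cong_gen_trans)
  have "eqv M (D @ u @ v) (D @ pad_word \<sigma> B)"
  proof (unfold D_def, rule core_word_mod_counts)
    show "set (u @ v) \<subseteq> B" "set (pad_word \<sigma> B) \<subseteq> B"
      using \<open>set u \<subseteq> B\<close> \<open>set v \<subseteq> B\<close> set_pad_word[OF \<open>finite B\<close>] by auto
    fix x assume "x \<in> B"
    define q where "q = \<sigma> x - 1"
    have "count (mset w) x mod q = count (mset (w @ w)) x mod q"
      using eqv_count_mod[OF idem] by (simp add: q_def)
    then have "q dvd count (mset w) x"
      using mod_eq_dvd_iff_nat[of "count (mset w) x" "count (mset w) x + count (mset w) x" q]
      by simp
    moreover have "count (mset w) x mod q = Suc (count (mset (u @ v)) x) mod q"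
      using eqv_count_mod[OF wg] \<open>x \<in> B\<close> \<open>finite B\<close> by (simp add: q_def D_def count_core_word)
    ultimately have "count (mset (u @ v)) x mod q = q - 1"
      by (metis dvd_imp_mod_0 mod_0_imp_dvd mod_pred_of_dvd_Suc)
    moreover have "q - 1 = \<sigma> x - 2" by (simp add: q_def)
    moreover have "\<sigma> x - 2 < q" using period_ge_2 \<open>x \<in> B\<close> \<open>B \<subseteq> X\<close> by (force simp: q_def)
    ultimately show "count (mset (u @ v)) x mod (\<sigma> x - 1) = count (mset (pad_word \<sigma> B)) x mod (\<sigma> x - 1)"
      using \<open>x \<in> B\<close> \<open>finite B\<close> by (simp add: count_pad_word q_def)
  qed fact+
  with wg show ?thesis by (simp add: idem_word_def B_def D_def cong_gen_trans)
qed

lemma bij_betw_idempotents: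
  assumes "finite X"
  shows "bij_betw (\<lambda>B. elem_of (M_rels M X \<sigma>) X (idem_word M \<sigma> B)) (Pow X) (idempotents M X \<sigma>)"
proof (rule bij_betw_imageI)
  have fin: "finite B" if "B \<in> Pow X" for B using that assms finite_subset by auto
  show "inj_on (\<lambda>B. elem_of (M_rels M X \<sigma>) X (idem_word M \<sigma> B)) (Pow X)"
  proof (rule inj_onI)
    fix B B' assume B: "B \<in> Pow X" "B' \<in> Pow X"
      and eq: "elem_of (M_rels M X \<sigma>) X (idem_word M \<sigma> B) = elem_of (M_rels M X \<sigma>) X (idem_word M \<sigma> B')"
    have "idem_word M \<sigma> B' \<in> elem_of (M_rels M X \<sigma>) X (idem_word M \<sigma> B')"
      using B set_idem_word[OF fin] by (auto simp: elem_of_def)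
    then have "idem_word M \<sigma> B' \<in> elem_of (M_rels M X \<sigma>) X (idem_word M \<sigma> B)" by (simp only: eq)
    then have "eqv M (idem_word M \<sigma> B) (idem_word M \<sigma> B')" by (simp add: elem_of_def)
    then have "set (idem_word M \<sigma> B) = set (idem_word M \<sigma> B')" by (rule eqv_set_eq)
    then show "B = B'" using set_idem_word[OF fin[OF B(1)]] set_idem_word[OF fin[OF B(2)]] by simp
  qed
  show "(\<lambda>B. elem_of (M_rels M X \<sigma>) X (idem_word M \<sigma> B)) ` Pow X = idempotents M X \<sigma>"
  proof (intro set_eqI iffI)
    fix Y assume "Y \<in> (\<lambda>B. elem_of (M_rels M X \<sigma>) X (idem_word M \<sigma> B)) ` Pow X"
    then obtain B where B: "B \<in> Pow X" "Y = elem_of (M_rels M X \<sigma>) X (idem_word M \<sigma> B)" by blast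
    then have "idem_word M \<sigma> B \<in> lists X"
      by (auto simp: in_lists_conv_set set_idem_word[OF fin])
    with B idem_word_idempotent[OF fin[OF B(1)]] show "Y \<in> idempotents M X \<sigma>"
      unfolding idempotents_def by blast
  next
    fix Y assume "Y \<in> idempotents M X \<sigma>"
    then obtain w where w: "Y = elem_of (M_rels M X \<sigma>) X w" "set w \<subseteq> X" "eqv M (w @ w) w"
      unfolding idempotents_def by auto
    then have "Y = elem_of (M_rels M X \<sigma>) X (idem_word M \<sigma> (set w))"
      using elem_of_cong[OF idempotent_eqv_idem_word] by simp
    then show "Y \<in> (\<lambda>B. elem_of (M_rels M X \<sigma>) X (idem_word M \<sigma> B)) ` Pow X" using w(2) by blast
  qed
qed

end

lemma idem_word_J_min:
  assumes "finite B"
  shows "J_min_word M B (idem_word M \<sigma> B)"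
proof -
  interpret B2: periodic_generators B "\<lambda>_. 2" by unfold_locales simp
  have absorb: "B2.eqv M (idem_word M \<sigma> B) ([] @ x @ idem_word M \<sigma> B)" if "set x \<subseteq> B" for x
  proof -
    have "B2.eqv M (core_word M B @ pad_word \<sigma> B) (core_word M B @ x @ pad_word \<sigma> B)"
      by (rule B2.core_word_mod_counts[OF assms subset_refl])
        (use that set_pad_word[OF assms] in simp_all)
    also have "B2.eqv M \<dots> (x @ core_word M B @ pad_word \<sigma> B)"
      using cong_gen_context[OF cong_gen_sym[OF central_word_commute[OF
            B2.core_word_central[OF assms subset_refl, of M] that]], of "[]" "pad_word \<sigma> B"]
      by simp
    finally show ?thesis by (simp add: idem_word_def)
  qed
  have "idem_word M \<sigma> B \<in> lists B" by (simp add: in_lists_conv_set set_idem_word[OF assms])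
  moreover have "\<exists>u\<in>lists B. \<exists>v\<in>lists B. B2.eqv M (idem_word M \<sigma> B) (u @ x @ v)"
    if "x \<in> lists B" for x
    using absorb[of x] that \<open>idem_word M \<sigma> B \<in> lists B\<close> by blast
  ultimately show ?thesis unfolding J_min_word_def by blast
qed

theorem mainTheorem5:
  fixes A :: "'a::linorder set" and \<sigma> :: "'a \<Rightarrow> nat" and M :: monoid_kind
  assumes "finite A"
    and "\<forall>a \<in> A. \<sigma> a \<ge> 2"
  shows "card (idempotents M A \<sigma>) = 2 ^ card A
    \<and> (\<exists>f. bij_betw f (Pow A) (idempotents M A \<sigma>)
         \<and> (\<forall>B \<in> Pow A. \<exists>I \<in> lists A. f B = elem_of (M_rels M A \<sigma>) A I
               \<and> (\<exists>m. J_min_word M B m \<and> inflation m I)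
               \<and> cong_gen (Com_rels A \<sigma>) I (target_word B \<sigma>)))"
proof -
  interpret periodic_generators A \<sigma> using assms(2) by unfold_locales simp
  define f where "f B = elem_of (M_rels M A \<sigma>) A (idem_word M \<sigma> B)" for B
  have bij: "bij_betw f (Pow A) (idempotents M A \<sigma>)"
    unfolding f_def by (rule bij_betw_idempotents[OF assms(1)])
  have "\<exists>I \<in> lists A. f B = elem_of (M_rels M A \<sigma>) A I \<and> (\<exists>m. J_min_word M B m \<and> inflation m I)
      \<and> cong_gen (Com_rels A \<sigma>) I (target_word B \<sigma>)" if "B \<in> Pow A" for B
  proof (intro bexI conjI exI)
    have B: "finite B" "B \<subseteq> A" "\<forall>b\<in>B. 2 \<le> \<sigma> b"
      using that assms finite_subset by auto
    show "idem_word M \<sigma> B \<in> lists A" using set_idem_word[OF B(1)] B(2) by auto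
    show "J_min_word M B (idem_word M \<sigma> B)" by (rule idem_word_J_min[OF B(1)])
    show "cong_gen (Com_rels A \<sigma>) (idem_word M \<sigma> B) (target_word B \<sigma>)"
      by (rule idem_word_Com_eqv_target_word[OF B])
  qed (simp_all add: f_def inflation_refl)
  moreover have "card (idempotents M A \<sigma>) = 2 ^ card A"
    using bij_betw_same_card[OF bij] card_Pow[of A] assms(1) by simp
  ultimately show ?thesis using bij by blast
qed

end
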